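(* Consider the storage model described in the context, and assume: (i) the graph $\mathcal G$ on $\{1,\dots,n\}$ in which $j,k$ are adjacent iff $j,k\in S_i$ for some $i$ is connected; (ii) the linear system \[ \sum_{j=1}^{\kappa_i}\alpha_{ij}=\lambda_i\ (i=1,\dots,\mathcal K),\qquad \sum_{i=1}^{\mathcal K}\sum_{j=1}^{\kappa_i}\alpha_{ij}\,\delta_{\ell,s^i_j}=\tfrac1n\ (\ell=1,\dots,n) \] has a positive solution $(\alpha_{ij})$ (all $\alpha_{ij}>0$). Suppose the embedded shape chain $\{\tilde X^e(m)\}_{m\in\mathbb N}$ is constructed using either the Join the Shortest Queue routing policy or the $\varepsilon$-perturbed strong equilibrium routing policy (built from such a positive solution, with $0<\varepsilon<\min_{i,j}\alpha_{ij}$). Then $\tilde X^e(m)$ is positive recurrent, i.e. $\mathbf E(\tau\mid \tilde X^e(0)=x)<\infty$ for every state $x$, where $\tau=\inf\{m>0:\tilde X^e(m)=0\}$. Moreover, there exists $c>0$ such that for all $0<c'<c$, $\mathbf E(e^{c'\tau}\mid \tilde X^e(0)=x)<\infty$ for all $x$.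
   Context: Storage model: there are $n$ nodes $\{1,\dots,n\}$ and $\mathcal K\ge1$ non-empty neighborhoods $S_1,\dots,S_{\mathcal K}\subset\{1,\dots,n\}$ with $\bigcup_i S_i=\{1,\dots,n\}$; $\kappa_i=|S_i|$ and $S_i=\{s^i_1,\dots,s^i_{\kappa_i}\}$ is a fixed enumeration. Items arrive at $S_i$ as independent Poisson processes with rates $\lambda_i>0$, $\sum_{i=1}^{\mathcal K}\lambda_i=1$. Let $\Lambda_i=\{p\in\mathbb R^{\kappa_i}:p_j\ge0,\sum_j p_j=1\}$. A routing policy is a map $P:\mathbb N^n\to\Lambda_1\times\dots\times\Lambda_{\mathcal K}$, $P(x)=(p^{(1)}(x),\dots,p^{(\mathcal K)}(x))$, with $P(x+c\mathbf 1)=P(x)$ for all integers $c$ (it depends only on the shape); an item arriving at $S_i$ when the configuration is $x$ is stored at node $s^i_j$ with probability $p^{(i)}_j(x)$, independently for each arrival. $X(t)=(X_1(t),\dots,X_n(t))$ is the number of items at each node at time $t$, $M(t)=\frac1n\sum_iX_i(t)$, and the shape is $\tilde X(t)=(X_1(t)-M(t),\dots,X_n(t)-M(t))$. $X^e(m)$, $\tilde X^e(m)$ denote the embedded chains observed at successive arrival moments. For $x\in\mathbb N^n$, $s^i_{j_{\min}}(x)$ is the first node of $S_i$ (in the enumeration) at which $x$ is minimal over $S_i$, and $s^i_{j_{\max}}(x)$ the last node of $S_i$ at which $x$ is maximal over $S_i$. JSQ routing policy: $p^{(i)}_j(x)=1$ if $s^i_j=s^i_{j_{\min}}(x)$ and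 $0$ otherwise. $\varepsilon$-PSERP: given a positive solution $\alpha_{ij}$ of the system above and $0<\varepsilon<\min\alpha_{ij}$, $p^{(i)}_j(x)=(\alpha_{ij}+\varepsilon)/\lambda_i$ if $s^i_j=s^i_{j_{\min}}(x)$, $(\alpha_{ij}-\varepsilon)/\lambda_i$ if $s^i_j=s^i_{j_{\max}}(x)$, $\alpha_{ij}/\lambda_i$ otherwise; if $\kappa_i=1$ then $p^{(i)}_1\equiv1$. $\delta_{\ell,m}$ is the Kronecker delta. *)

theory Defs
  imports "HOL-Probability.Probability_Mass_Function"
begin

(* Nodes are 1..n, neighborhoods are indexed 1..K.  S i :: nat list is the fixed
   enumeration of S_i, so s^i_j (paper, j = 1..kappa_i) is  S i ! (j-1)  here, i.e.
   enumeration positions are 0-based: j < length (S i).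
   A configuration x in N^n is a function nat => nat, vanishing outside {1..n}.
   A routing policy is given as  P x i j = p^{(i)}_j(x)  (j 0-based position). *)

definition kap :: "(nat \<Rightarrow> nat list) \<Rightarrow> nat \<Rightarrow> nat" where
  "kap S i = length (S i)"

definition configs :: "nat \<Rightarrow> (nat \<Rightarrow> nat) set" where
  "configs n = {x. \<forall>l. l \<notin> {1..n} \<longrightarrow> x l = 0}"

definition storage_model ::
  "nat \<Rightarrow> nat \<Rightarrow> (nat \<Rightarrow> nat list) \<Rightarrow> (nat \<Rightarrow> real) \<Rightarrow> bool" where
  "storage_model n K S lam \<longleftrightarrow>
     K \<ge> 1 \<and>
     (\<forall>i\<in>{1..K}. S i \<noteq> [] \<and> distinct (S i) \<and> set (S i) \<subseteq> {1..n}) \<and>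
     (\<Union>i\<in>{1..K}. set (S i)) = {1..n} \<and>
     (\<forall>i\<in>{1..K}. lam i > 0) \<and> (\<Sum>i=1..K. lam i) = 1"

definition adjG :: "nat \<Rightarrow> (nat \<Rightarrow> nat list) \<Rightarrow> nat \<Rightarrow> nat \<Rightarrow> bool" where
  "adjG K S j k \<longleftrightarrow> (\<exists>i\<in>{1..K}. j \<in> set (S i) \<and> k \<in> set (S i))"

definition graph_connected :: "nat \<Rightarrow> nat \<Rightarrow> (nat \<Rightarrow> nat list) \<Rightarrow> bool" where
  "graph_connected n K S \<longleftrightarrow> (\<forall>j\<in>{1..n}. \<forall>k\<in>{1..n}. (adjG K S)\<^sup>*\<^sup>* j k)"

definition positive_solution ::
  "nat \<Rightarrow> nat \<Rightarrow> (nat \<Rightarrow> nat list) \<Rightarrow> (nat \<Rightarrow> real) \<Rightarrow> (nat \<Rightarrow> nat \<Rightarrow> real) \<Rightarrow> bool" where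
  "positive_solution n K S lam \<alpha> \<longleftrightarrow>
     (\<forall>i\<in>{1..K}. \<forall>j<kap S i. \<alpha> i j > 0) \<and>
     (\<forall>i\<in>{1..K}. (\<Sum>j<kap S i. \<alpha> i j) = lam i) \<and>
     (\<forall>l\<in>{1..n}. (\<Sum>i=1..K. \<Sum>j<kap S i. \<alpha> i j * (if l = S i ! j then 1 else 0)) = 1 / real n)"

definition jmin :: "(nat \<Rightarrow> nat list) \<Rightarrow> (nat \<Rightarrow> nat) \<Rightarrow> nat \<Rightarrow> nat" where
  "jmin S x i = (LEAST j. j < kap S i \<and> x (S i ! j) = Min (x ` set (S i)))"

definition jmax :: "(nat \<Rightarrow> nat list) \<Rightarrow> (nat \<Rightarrow> nat) \<Rightarrow> nat \<Rightarrow> nat" where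
  "jmax S x i = (GREATEST j. j < kap S i \<and> x (S i ! j) = Max (x ` set (S i)))"

definition JSQ :: "(nat \<Rightarrow> nat list) \<Rightarrow> (nat \<Rightarrow> nat) \<Rightarrow> nat \<Rightarrow> nat \<Rightarrow> real" where
  "JSQ S x i j = (if j = jmin S x i then 1 else 0)"

definition PSERP ::
  "(nat \<Rightarrow> nat list) \<Rightarrow> (nat \<Rightarrow> real) \<Rightarrow> (nat \<Rightarrow> nat \<Rightarrow> real) \<Rightarrow> real
     \<Rightarrow> (nat \<Rightarrow> nat) \<Rightarrow> nat \<Rightarrow> nat \<Rightarrow> real" where
  "PSERP S lam \<alpha> \<epsilon> x i j =
     (if kap S i = 1 then 1
      else if j = jmin S x i then (\<alpha> i j + \<epsilon>) / lam i
      else if j = jmax S x i then (\<alpha> i j - \<epsilon>) / lam i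
      else \<alpha> i j / lam i)"

(* one step of the embedded chain X^e: an arrival goes to S_i with probability lam i
   (= lam_i / sum of rates), then to node S i ! j with probability P x i j *)
definition nbhd_pmf :: "nat \<Rightarrow> (nat \<Rightarrow> real) \<Rightarrow> nat pmf" where
  "nbhd_pmf K lam = embed_pmf (\<lambda>i. if i \<in> {1..K} then lam i else 0)"

definition route_pmf ::
  "(nat \<Rightarrow> nat list) \<Rightarrow> ((nat \<Rightarrow> nat) \<Rightarrow> nat \<Rightarrow> nat \<Rightarrow> real) \<Rightarrow> (nat \<Rightarrow> nat) \<Rightarrow> nat \<Rightarrow> nat pmf" where
  "route_pmf S P x i = embed_pmf (\<lambda>j. if j < kap S i then P x i j else 0)"

definition step_pmf ::
  "nat \<Rightarrow> (nat \<Rightarrow> nat list) \<Rightarrow> (nat \<Rightarrow> real) \<Rightarrow> ((nat \<Rightarrow> nat) \<Rightarrow> nat \<Rightarrow> nat \<Rightarrow> real)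
     \<Rightarrow> (nat \<Rightarrow> nat) \<Rightarrow> (nat \<Rightarrow> nat) pmf" where
  "step_pmf K S lam P x =
     bind_pmf (nbhd_pmf K lam) (\<lambda>i.
       map_pmf (\<lambda>j. x(S i ! j := Suc (x (S i ! j)))) (route_pmf S P x i))"

(* joint law of (X^e(1), ..., X^e(m)) given X^e(0) = x *)
primrec traj :: "((nat \<Rightarrow> nat) \<Rightarrow> (nat \<Rightarrow> nat) pmf) \<Rightarrow> nat \<Rightarrow> (nat \<Rightarrow> nat) \<Rightarrow> (nat \<Rightarrow> nat) list pmf" where
  "traj st 0 x = return_pmf []"
| "traj st (Suc m) x = bind_pmf (st x) (\<lambda>y. map_pmf (Cons y) (traj st m y))"

definition mean :: "nat \<Rightarrow> (nat \<Rightarrow> nat) \<Rightarrow> real" where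
  "mean n x = (\<Sum>l=1..n. real (x l)) / real n"

definition shape :: "nat \<Rightarrow> (nat \<Rightarrow> nat) \<Rightarrow> nat \<Rightarrow> real" where
  "shape n x = (\<lambda>l. if l \<in> {1..n} then real (x l) - mean n x else 0)"

(* P(tau = m | X~^e(0) = shape x), tau = inf {m > 0. X~^e(m) = 0};
   ys = [X^e(1),...,X^e(m)] *)
definition tau_prob ::
  "nat \<Rightarrow> ((nat \<Rightarrow> nat) \<Rightarrow> (nat \<Rightarrow> nat) pmf) \<Rightarrow> (nat \<Rightarrow> nat) \<Rightarrow> nat \<Rightarrow> real" where
  "tau_prob n st x m = measure_pmf.prob (traj st m x)
     {ys. 0 < m \<and> shape n (ys ! (m - 1)) = (\<lambda>_. 0) \<and> (\<forall>k < m - 1. shape n (ys ! k) \<noteq> (\<lambda>_. 0))}"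

(* E(g(tau)) < infinity for a nonnegative g with g(infinity) = infinity:
   tau is a.s. finite and sum_m g(m) P(tau = m) converges *)
definition finite_moment ::
  "(nat \<Rightarrow> real) \<Rightarrow> nat \<Rightarrow> ((nat \<Rightarrow> nat) \<Rightarrow> (nat \<Rightarrow> nat) pmf) \<Rightarrow> (nat \<Rightarrow> nat) \<Rightarrow> bool" where
  "finite_moment g n st x \<longleftrightarrow>
     (tau_prob n st x) sums 1 \<and> summable (\<lambda>m. g m * tau_prob n st x m)"

definition positive_recurrent_exp ::
  "nat \<Rightarrow> nat \<Rightarrow> (nat \<Rightarrow> nat list) \<Rightarrow> (nat \<Rightarrow> real) \<Rightarrow> ((nat \<Rightarrow> nat) \<Rightarrow> nat \<Rightarrow> nat \<Rightarrow> real) \<Rightarrow> bool" where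
  "positive_recurrent_exp n K S lam P \<longleftrightarrow>
     (\<forall>x\<in>configs n. finite_moment (\<lambda>m. real m) n (step_pmf K S lam P) x) \<and>
     (\<exists>c>0. \<forall>c'. 0 < c' \<and> c' < c \<longrightarrow>
        (\<forall>x\<in>configs n. finite_moment (\<lambda>m. exp (c' * real m)) n (step_pmf K S lam P) x))"

end

theory Submission
  imports Defs
begin

text \<open>Let \<open>W\<close> be the Euclidean norm of the shape. Both policies route, on every neighbourhood, below
  the equilibrium routing \<open>\<alpha>\<close> by a multiple of the local spread; summing over the neighbourhoods
  and using connectivity of the graph, the squared norm of the shape has drift at most
  \<open>1 - 2\<kappa>D\<close>, where \<open>D\<close> is the global spread. Hence outside a ball of radius \<open>\<surd>n/\<kappa>\<close> the norm \<open>W\<close> drifts down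
  by a constant, and \<open>exp (\<theta>W)\<close> contracts by a constant factor for small \<open>\<theta>\<close>. Inside the ball the
  spread is bounded, and sending every arrival to a globally shortest queue, which the policy does
  with probability bounded below, reaches the zero shape within a bounded number \<open>N\<close> of steps;
  so the \<open>N\<close>-step iterate of \<open>exp (\<theta>W)\<close>, killed at the zero shape, contracts there as well.
  Hence the probability that the return time exceeds \<open>m\<close> decays geometrically in \<open>m\<close>, which
  gives all the moments claimed.\<close>

lemma sqrt_le_tangent: assumes "0 < a" "0 \<le> b"
  shows "sqrt b \<le> sqrt a + (b - a) / (2 * sqrt a)"
proof -
  let ?s = "sqrt a" and ?r = "sqrt b"
  have s: "0 < ?s" using assms by simp
  have "2 * ?s * ?r \<le> ?s\<^sup>2 + ?r\<^sup>2" using sum_squares_bound[of ?s ?r] by (simp add: algebra_simps)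
  then have "?r \<le> (?s\<^sup>2 + ?r\<^sup>2) / (2 * ?s)" using s by (simp add: pos_le_divide_eq mult.commute)
  also have "\<dots> = ?s + (b - a) / (2 * ?s)"
    using s assms by (simp add: field_simps power2_eq_square)
  finally show ?thesis .
qed

lemma exp_le_quadratic: fixes t :: real assumes "\<bar>t\<bar> \<le> 1" shows "exp t \<le> 1 + t + t\<^sup>2"
proof (cases "t \<ge> 0")
  case True then show ?thesis using exp_bound assms by auto
next
  case False
  define s where "s = - t"
  have s: "0 < s" "s \<le> 1" using False assms unfolding s_def by auto
  have lower: "(1 + s / 2)\<^sup>2 \<le> exp s"
    using exp_ge_one_plus_x_over_n_power_n[where x=s and n=2] s by simp
  have pos: "0 < (1 + s / 2)\<^sup>2" using s by simp
  have "(1 + s / 2)\<^sup>2 * (1 - s + s\<^sup>2) = 1 + s\<^sup>2 / 4 + 3 * s^3 / 4 + s^4 / 4"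
    by (simp add: power2_eq_square power3_eq_cube power4_eq_xxxx field_simps)
  then have key: "1 \<le> (1 + s / 2)\<^sup>2 * (1 - s + s\<^sup>2)" using s by simp
  have "exp t = 1 / exp s" unfolding s_def by (simp add: exp_minus field_simps)
  also have "\<dots> \<le> 1 / (1 + s / 2)\<^sup>2" using lower pos by (intro divide_left_mono) auto
  also have "\<dots> \<le> 1 - s + s\<^sup>2" using key pos by (simp add: divide_le_eq mult.commute)
  also have "\<dots> = 1 + t + t\<^sup>2" unfolding s_def by simp
  finally show ?thesis .
qed

lemma summable_exp_mult_geometric_tail:
  fixes t :: "nat \<Rightarrow> real"
  assumes nonneg: "\<And>m. 0 \<le> t m" and tail: "\<And>m. t (Suc m) \<le> C * \<rho> ^ m"
    and \<rho>: "0 < \<rho>" and c: "c < - ln \<rho>"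
  shows "summable (\<lambda>m. exp (c * real m) * t m)"
proof -
  have "exp c < exp (- ln \<rho>)" using c by simp
  then have ratio: "exp c * \<rho> < 1" using \<rho> by (simp add: exp_minus field_simps)
  have "summable (\<lambda>m. (exp c * C) * (exp c * \<rho>) ^ m)"
    using ratio \<rho> by (intro summable_mult summable_geometric) simp
  then have "summable (\<lambda>m. exp (c * real (Suc m)) * t (Suc m))"
  proof (rule summable_comparison_test')
    fix m :: nat
    have "exp (c * real (Suc m)) * t (Suc m) \<le> exp (c * real (Suc m)) * (C * \<rho> ^ m)"
      using tail[of m] by (intro mult_left_mono) auto
    also have "\<dots> = (exp c * C) * (exp c * \<rho>) ^ m"
    proof -
      have "exp (c * real (Suc m)) = exp c * exp c ^ m"
        by (simp add: distrib_left exp_add exp_of_nat_mult[symmetric] mult.commute)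
      then show ?thesis by (simp add: power_mult_distrib algebra_simps)
    qed
    finally show "norm (exp (c * real (Suc m)) * t (Suc m)) \<le> (exp c * C) * (exp c * \<rho>) ^ m"
      using nonneg[of "Suc m"] by simp
  qed
  then show ?thesis by (subst (asm) summable_Suc_iff)
qed

lemma summable_mult_of_exp_moment:
  fixes t :: "nat \<Rightarrow> real"
  assumes nonneg: "\<And>m. 0 \<le> t m" and c: "0 < c" and exp_moment: "summable (\<lambda>m. exp (c * real m) * t m)"
  shows "summable (\<lambda>m. real m * t m)"
proof (rule summable_comparison_test')
  show "summable (\<lambda>m. (1 / c) * (exp (c * real m) * t m))"
    using exp_moment by (rule summable_mult)
  fix m :: nat
  have "c * real m \<le> exp (c * real m)" using exp_ge_add_one_self[of "c * real m"] by linarith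
  then have "real m \<le> (1 / c) * exp (c * real m)" using c by (simp add: field_simps)
  then have "real m * t m \<le> (1 / c) * exp (c * real m) * t m"
    using nonneg[of m] by (rule mult_right_mono)
  then show "norm (real m * t m) \<le> (1 / c) * (exp (c * real m) * t m)"
    using nonneg[of m] by (simp add: mult.assoc)
qed

lemma expectation_embed_pmf_finite:
  fixes f :: "'a \<Rightarrow> real"
  assumes A: "finite A" and nonneg: "\<And>x. 0 \<le> f x" and out: "\<And>x. x \<notin> A \<Longrightarrow> f x = 0"
    and total: "sum f A = 1"
  shows "measure_pmf.expectation (embed_pmf f) g = (\<Sum>a\<in>A. f a * g a)"
proof -
  have "(\<integral>\<^sup>+x. ennreal (f x) \<partial>count_space UNIV) = 1"
    using A out total nonneg by (subst nn_integral_count_space'[of A]) (auto simp: sum_ennreal)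
  then have pmf: "pmf (embed_pmf f) x = f x" for x
    using pmf_embed_pmf[of f] nonneg by blast
  show ?thesis
    using out pmf by (subst integral_measure_pmf_real[OF A]) (auto simp: set_pmf_eq mult.commute)
qed

lemma expectation_bind_pmf_bounded:
  fixes g :: "'b \<Rightarrow> real"
  assumes "\<And>y. \<bar>g y\<bar> \<le> B"
  shows "measure_pmf.expectation (bind_pmf M N) g
       = (\<integral>x. measure_pmf.expectation (N x) g \<partial>measure_pmf M)"
  unfolding measure_pmf_bind
  by (rule integral_bind[where K="count_space UNIV" and B=B and B'=1])
     (use assms in \<open>auto simp: measure_pmf.emeasure_space_1 measure_pmf_in_subprob_algebra\<close>)

lemma prob_bind_pmf:
  "measure_pmf.prob (bind_pmf M N) X = (\<integral>x. measure_pmf.prob (N x) X \<partial>measure_pmf M)"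
  unfolding measure_pmf_bind
  by (rule measure_pmf.measure_bind[where N="count_space UNIV"])
     (auto simp: measure_pmf_in_subprob_algebra)

section \<open>Configurations and their shapes\<close>

definition store :: "(nat \<Rightarrow> nat) \<Rightarrow> nat \<Rightarrow> nat \<Rightarrow> nat" where
  "store x l = x(l := Suc (x l))"

definition spread :: "nat \<Rightarrow> (nat \<Rightarrow> nat) \<Rightarrow> real" where
  "spread n x = real (Max (x ` {1..n})) - real (Min (x ` {1..n}))"

definition nbhd_spread :: "(nat \<Rightarrow> nat list) \<Rightarrow> (nat \<Rightarrow> nat) \<Rightarrow> nat \<Rightarrow> real" where
  "nbhd_spread S x i = real (Max (x ` set (S i))) - real (Min (x ` set (S i)))"

definition shape_sq :: "nat \<Rightarrow> (nat \<Rightarrow> nat) \<Rightarrow> real" where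
  "shape_sq n x = (\<Sum>l=1..n. (shape n x l)\<^sup>2)"

definition shape_norm :: "nat \<Rightarrow> (nat \<Rightarrow> nat) \<Rightarrow> real" where
  "shape_norm n x = sqrt (shape_sq n x)"

lemma shape_sq_nonneg: "0 \<le> shape_sq n x"
  unfolding shape_sq_def by (auto intro: sum_nonneg)

lemma shape_norm_nonneg: "0 \<le> shape_norm n x"
  unfolding shape_norm_def by (simp add: shape_sq_nonneg)

lemma shape_norm_squared: "(shape_norm n x)\<^sup>2 = shape_sq n x"
  unfolding shape_norm_def by (simp add: shape_sq_nonneg)

lemma shape_apply: "l \<in> {1..n} \<Longrightarrow> shape n x l = real (x l) - mean n x"
  unfolding shape_def by simp

lemma sum_shape: assumes "n \<ge> 1" shows "(\<Sum>l=1..n. shape n x l) = 0"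
proof -
  have "(\<Sum>l=1..n. shape n x l) = (\<Sum>l=1..n. real (x l)) - real n * mean n x"
    by (simp add: shape_apply sum_subtractf)
  also have "\<dots> = 0" using assms unfolding mean_def by simp
  finally show ?thesis .
qed

lemma mean_store: assumes "l \<in> {1..n}" shows "mean n (store x l) = mean n x + 1 / real n"
proof -
  have "(\<Sum>k=1..n. real (store x l k)) = (\<Sum>k=1..n. real (x k) + (if k = l then 1 else 0))"
    by (intro sum.cong) (auto simp: store_def)
  also have "\<dots> = (\<Sum>k=1..n. real (x k)) + 1"
    using assms by (simp add: sum.distrib)
  finally show ?thesis unfolding mean_def by (simp add: add_divide_distrib)
qed

lemma shape_store: assumes "l \<in> {1..n}" "k \<in> {1..n}"
  shows "shape n (store x l) k = shape n x k + (if k = l then 1 else 0) - 1 / real n"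
  using assms by (simp add: shape_apply mean_store) (simp add: store_def)

lemma shape_sq_store: assumes l: "l \<in> {1..n}"
  shows "shape_sq n (store x l) = shape_sq n x + 2 * shape n x l + 1 - 1 / real n"
proof -
  have n: "n \<ge> 1" using l by auto
  let ?z = "shape n x"
  let ?b = "\<lambda>k. (if k = l then 1 else 0) - 1 / real n :: real"
  have "shape_sq n (store x l) = (\<Sum>k=1..n. (?z k + ?b k)\<^sup>2)"
    unfolding shape_sq_def by (intro sum.cong) (auto simp: shape_store[OF l] algebra_simps)
  also have "\<dots> = (\<Sum>k=1..n. (?z k)\<^sup>2) + 2 * (\<Sum>k=1..n. ?z k * ?b k) + (\<Sum>k=1..n. (?b k)\<^sup>2)"
    by (simp add: power2_sum sum.distrib sum_distrib_left mult.assoc)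
  also have "(\<Sum>k=1..n. ?z k * ?b k) = ?z l - (\<Sum>k=1..n. ?z k) / real n"
    using l by (simp add: right_diff_distrib sum_subtractf sum_divide_distrib
                          if_distrib[where f="\<lambda>t. _ * t"] cong: if_cong)
  also have "(\<Sum>k=1..n. ?z k) = 0" using sum_shape[OF n] .
  also have "(\<Sum>k=1..n. (?b k)\<^sup>2) = 1 - 1 / real n"
  proof -
    have "(\<Sum>k=1..n. (?b k)\<^sup>2) = (\<Sum>k=1..n. (if k = l then 1 - 2 / real n else 0) + 1 / (real n)\<^sup>2)"
      by (intro sum.cong) (auto simp: power2_eq_square field_simps)
    also have "\<dots> = 1 - 2 / real n + real n / (real n)\<^sup>2"
      using l by (simp add: sum.distrib)
    also have "\<dots> = 1 - 1 / real n" using n by (simp add: power2_eq_square field_simps)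
    finally show ?thesis .
  qed
  finally show ?thesis unfolding shape_sq_def by simp
qed

lemma abs_shape_le_shape_norm: assumes "l \<in> {1..n}" shows "\<bar>shape n x l\<bar> \<le> shape_norm n x"
proof -
  have "(shape n x l)\<^sup>2 \<le> shape_sq n x"
    unfolding shape_sq_def using assms by (intro member_le_sum) auto
  then show ?thesis unfolding shape_norm_def by (simp add: real_le_rsqrt)
qed

lemma shape_norm_store: assumes l: "l \<in> {1..n}"
  shows "\<bar>shape_norm n (store x l) - shape_norm n x\<bar> \<le> 1"
proof -
  have inv_n: "0 \<le> 1 / real n" by simp
  have "shape n x l \<le> shape_norm n x" using abs_shape_le_shape_norm[OF l, of x] by linarith
  then have "shape_sq n (store x l) \<le> (shape_norm n x + 1)\<^sup>2"
    using shape_sq_store[OF l, of x] shape_norm_squared[of n x] inv_n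
    by (simp only: power2_sum power_one mult_1_right)
  then have "shape_norm n (store x l) \<le> shape_norm n x + 1"
    unfolding shape_norm_def[of n "store x l"] by (intro real_le_lsqrt) (auto simp: shape_norm_nonneg)
  moreover have "- shape_norm n (store x l) \<le> shape n x l + 1 - 1 / real n"
    using abs_shape_le_shape_norm[OF l, of "store x l"] shape_store[OF l l, of x] by simp
  then have "shape_sq n x \<le> (shape_norm n (store x l) + 1)\<^sup>2"
    using shape_sq_store[OF l, of x] shape_norm_squared[of n "store x l"] inv_n
    by (simp only: power2_sum power_one mult_1_right)
  then have "shape_norm n x \<le> shape_norm n (store x l) + 1"
    unfolding shape_norm_def[of n x] by (intro real_le_lsqrt) (auto simp: shape_norm_nonneg)
  ultimately show ?thesis by linarith
qed

lemma mean_between_Min_Max: assumes "n \<ge> 1"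
  shows "real (Min (x ` {1..n})) \<le> mean n x" "mean n x \<le> real (Max (x ` {1..n}))"
proof -
  have "(\<Sum>l=1..n. real (Min (x ` {1..n}))) \<le> (\<Sum>l=1..n. real (x l))"
    by (intro sum_mono) auto
  then show "real (Min (x ` {1..n})) \<le> mean n x"
    using assms unfolding mean_def by (simp add: field_simps)
  have "(\<Sum>l=1..n. real (x l)) \<le> (\<Sum>l=1..n. real (Max (x ` {1..n})))"
    by (intro sum_mono) auto
  then show "mean n x \<le> real (Max (x ` {1..n}))"
    using assms unfolding mean_def by (simp add: field_simps)
qed

lemma abs_shape_le_spread: assumes l: "l \<in> {1..n}" shows "\<bar>shape n x l\<bar> \<le> spread n x"
proof -
  have n: "n \<ge> 1" using l by auto
  have "real (Min (x ` {1..n})) \<le> real (x l)" "real (x l) \<le> real (Max (x ` {1..n}))"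
    using l by auto
  then show ?thesis
    using mean_between_Min_Max[OF n, of x] shape_apply[OF l, of x]
    unfolding spread_def abs_le_iff by linarith
qed

lemma shape_norm_le_spread: assumes "n \<ge> 1" shows "shape_norm n x \<le> sqrt (real n) * spread n x"
proof -
  have spread_nonneg: "0 \<le> spread n x" using assms abs_shape_le_spread[of 1 n x] by auto
  have "shape_sq n x \<le> (\<Sum>l=1..n. (spread n x)\<^sup>2)"
    unfolding shape_sq_def using abs_shape_le_spread
    by (intro sum_mono) (metis abs_ge_zero power2_abs power_mono)
  then have "shape_sq n x \<le> (sqrt (real n) * spread n x)\<^sup>2"
    by (simp add: power_mult_distrib)
  then show ?thesis unfolding shape_norm_def by (intro real_le_lsqrt) (use spread_nonneg in auto)
qed

lemma spread_le_shape_norm: assumes "n \<ge> 1" shows "spread n x \<le> 2 * shape_norm n x"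
proof -
  have fin: "finite (x ` {1..n})" "x ` {1..n} \<noteq> {}" using assms by auto
  obtain l1 where l1: "l1 \<in> {1..n}" "x l1 = Max (x ` {1..n})"
    using Max_in[OF fin] by auto
  obtain l2 where l2: "l2 \<in> {1..n}" "x l2 = Min (x ` {1..n})"
    using Min_in[OF fin] by auto
  have "spread n x = shape n x l1 - shape n x l2"
    unfolding spread_def using l1 l2 by (simp add: shape_apply)
  then show ?thesis
    using abs_shape_le_shape_norm[OF l1(1), of x] abs_shape_le_shape_norm[OF l2(1), of x] by linarith
qed

lemma rtranclp_level_crossing:
  fixes x :: "nat \<Rightarrow> nat"
  assumes "(adjG K S)\<^sup>*\<^sup>* a b" "x a \<le> t" "t < x b"
  shows "\<exists>i\<in>{1..K}. \<exists>u\<in>set (S i). \<exists>v\<in>set (S i). x u \<le> t \<and> t < x v"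
  using assms(1,3)
proof (induction rule: rtranclp_induct)
  case base then show ?case using assms(2) by linarith
next
  case (step y z)
  show ?case
  proof (cases "t < x y")
    case True then show ?thesis using step.IH by simp
  next
    case False then show ?thesis using step.hyps(2) step.prems unfolding adjG_def by force
  qed
qed

lemma storage_model_nth_mem:
  "storage_model n K S lam \<Longrightarrow> i \<in> {1..K} \<Longrightarrow> j < kap S i \<Longrightarrow> S i ! j \<in> {1..n}"
  unfolding storage_model_def kap_def by (meson nth_mem subsetD)

lemma storage_model_n_ge_1: "storage_model n K S lam \<Longrightarrow> n \<ge> 1"
proof -
  assume "storage_model n K S lam"
  then have "set (S 1) \<subseteq> {1..n}" "S 1 \<noteq> []" unfolding storage_model_def by auto
  then show ?thesis by (cases "S 1") auto
qed

lemma storage_model_lam_le_1: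
  assumes sm: "storage_model n K S lam" and i: "i \<in> {1..K}" shows "lam i \<le> 1"
proof -
  have "lam i \<le> (\<Sum>i=1..K. lam i)"
    using sm by (intro member_le_sum[OF i]) (auto simp: storage_model_def less_imp_le)
  then show ?thesis using sm by (simp add: storage_model_def)
qed

lemma Min_le_Max_nbhd:
  fixes x :: "nat \<Rightarrow> nat"
  assumes "S i \<noteq> []" shows "Min (x ` set (S i)) \<le> Max (x ` set (S i))"
proof -
  obtain e where "e \<in> set (S i)" using assms by (cases "S i") auto
  then have "Min (x ` set (S i)) \<le> x e" "x e \<le> Max (x ` set (S i))" by auto
  then show ?thesis by linarith
qed

text \<open>Connectivity of the graph is used exactly here: every level between the global minimum and
  maximum of a configuration is crossed inside some neighbourhood.\<close>

lemma spread_le_sum_nbhd_spread: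
  assumes sm: "storage_model n K S lam" and conn: "graph_connected n K S"
  shows "spread n x \<le> (\<Sum>i=1..K. nbhd_spread S x i)"
proof -
  define mn where "mn = Min (x ` {1..n})"
  define mx where "mx = Max (x ` {1..n})"
  define A where "A i = {Min (x ` set (S i))..<Max (x ` set (S i))}" for i
  have Sne: "S i \<noteq> []" if "i \<in> {1..K}" for i using sm that by (simp add: storage_model_def)
  have fin: "finite (x ` {1..n})" "x ` {1..n} \<noteq> {}" using storage_model_n_ge_1[OF sm] by auto
  obtain a where a: "a \<in> {1..n}" "x a = mn" using Min_in[OF fin] unfolding mn_def by auto
  obtain b where b: "b \<in> {1..n}" "x b = mx" using Max_in[OF fin] unfolding mx_def by auto
  have cover: "\<exists>i\<in>{1..K}. t \<in> A i" if t: "t \<in> {mn..<mx}" for t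
  proof -
    have "(adjG K S)\<^sup>*\<^sup>* a b" using conn a b unfolding graph_connected_def by auto
    then obtain i u v where i: "i \<in> {1..K}" "u \<in> set (S i)" "v \<in> set (S i)" "x u \<le> t" "t < x v"
      using rtranclp_level_crossing[of K S a b x t] t a b by auto
    have "Min (x ` set (S i)) \<le> x u" "x v \<le> Max (x ` set (S i))" using i by auto
    then have "t \<in> A i" using i unfolding A_def atLeastLessThan_iff by linarith
    then show ?thesis using i(1) by blast
  qed
  have "card {mn..<mx} \<le> card (\<Union>i\<in>{1..K}. A i)"
    using cover by (intro card_mono) (auto simp: A_def)
  also have "\<dots> \<le> (\<Sum>i\<in>{1..K}. card (A i))"
    by (rule card_UN_le) simp
  finally have "mx - mn \<le> (\<Sum>i\<in>{1..K}. Max (x ` set (S i)) - Min (x ` set (S i)))"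
    by (simp add: A_def)
  then have c: "real (mx - mn) \<le> real (\<Sum>i\<in>{1..K}. Max (x ` set (S i)) - Min (x ` set (S i)))"
    by (simp only: of_nat_le_iff)
  have "mn \<le> mx" using a b fin unfolding mn_def mx_def by (metis Min_le finite_imageI image_eqI)
  then have "spread n x = real (mx - mn)" unfolding spread_def mn_def mx_def by simp
  also have "\<dots> \<le> real (\<Sum>i\<in>{1..K}. Max (x ` set (S i)) - Min (x ` set (S i)))" by (rule c)
  also have "\<dots> = (\<Sum>i=1..K. nbhd_spread S x i)"
    unfolding of_nat_sum nbhd_spread_def
    by (intro sum.cong refl) (use Min_le_Max_nbhd[where S=S] Sne in \<open>auto simp: of_nat_diff\<close>)
  finally show ?thesis .
qed

lemma jmin_spec: assumes "S i \<noteq> []"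
  shows "jmin S x i < kap S i \<and> x (S i ! jmin S x i) = Min (x ` set (S i))"
proof -
  have "Min (x ` set (S i)) \<in> x ` set (S i)" using assms by (intro Min_in) auto
  then obtain k where "k < kap S i" "x (S i ! k) = Min (x ` set (S i))"
    unfolding kap_def by (auto simp: in_set_conv_nth)
  then have "\<exists>j. j < kap S i \<and> x (S i ! j) = Min (x ` set (S i))" by blast
  then show ?thesis unfolding jmin_def by (rule LeastI_ex)
qed

lemma jmax_spec: assumes "S i \<noteq> []"
  shows "jmax S x i < kap S i \<and> x (S i ! jmax S x i) = Max (x ` set (S i))"
proof -
  have "Max (x ` set (S i)) \<in> x ` set (S i)" using assms by (intro Max_in) auto
  then obtain k where k: "k < kap S i" "x (S i ! k) = Max (x ` set (S i))"
    unfolding kap_def by (auto simp: in_set_conv_nth)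
  show ?thesis unfolding jmax_def
    by (rule GreatestI_nat[where k=k and b="kap S i"]) (use k in auto)
qed

text \<open>On a neighbourhood where all queues are equal, jmin is the first and jmax
  the last position; hence they never coincide once the neighbourhood has two nodes.\<close>

lemma jmin_ne_jmax: assumes "S i \<noteq> []" "kap S i \<ge> 2" shows "jmin S x i \<noteq> jmax S x i"
proof
  assume eq: "jmin S x i = jmax S x i"
  have mM: "Min (x ` set (S i)) = Max (x ` set (S i))"
    using jmin_spec[where S=S and i=i and x=x, OF assms(1)] jmax_spec[where S=S and i=i and x=x, OF assms(1)] eq by simp
  have all: "x (S i ! j) = Min (x ` set (S i))" if "j < kap S i" for j
  proof -
    have "S i ! j \<in> set (S i)" using that unfolding kap_def by simp
    then have "Min (x ` set (S i)) \<le> x (S i ! j)" "x (S i ! j) \<le> Max (x ` set (S i))" by auto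
    then show ?thesis using mM by linarith
  qed
  have "jmin S x i \<le> 0"
    unfolding jmin_def using all[of 0] assms(2) by (intro Least_le) simp
  moreover have "kap S i - 1 \<le> jmax S x i"
    unfolding jmax_def using all[of "kap S i - 1"] mM assms(2)
    by (intro Greatest_le_nat[where b="kap S i"]) auto
  ultimately show False using eq assms(2) by simp
qed

lemma positive_solution_lower_bound:
  assumes "positive_solution n K S lam \<alpha>"
  shows "\<exists>\<kappa>>0. \<forall>i\<in>{1..K}. \<forall>j<kap S i. \<kappa> \<le> \<alpha> i j"
proof -
  define A where "A = (\<lambda>(i, j). \<alpha> i j) ` (SIGMA i:{1..K}. {..<kap S i})"
  have fin: "finite A" unfolding A_def by auto
  have pos: "\<forall>a\<in>A. 0 < a" using assms unfolding positive_solution_def A_def by auto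
  have "0 < Min (insert 1 A)" using fin pos by (simp add: Min_gr_iff)
  moreover have "Min (insert 1 A) \<le> \<alpha> i j" if "i \<in> {1..K}" "j < kap S i" for i j
  proof -
    have "\<alpha> i j \<in> insert 1 A" using that unfolding A_def by force
    then show ?thesis using fin by simp
  qed
  ultimately show ?thesis by blast
qed

definition deficit :: "nat \<Rightarrow> (nat \<Rightarrow> nat) \<Rightarrow> nat" where
  "deficit n x = (\<Sum>l=1..n. Max (x ` {1..n}) - x l)"

lemma shape_eq_0_if_deficit_eq_0:
  assumes n: "n \<ge> 1" and "deficit n x = 0" shows "shape n x = (\<lambda>_. 0)"
proof -
  define M where "M = Max (x ` {1..n})"
  have all: "x l = M" if l: "l \<in> {1..n}" for l
  proof -
    have "M - x l = 0" using assms(2) l unfolding deficit_def M_def[symmetric] by simp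
    moreover have "x l \<le> M" using l unfolding M_def by simp
    ultimately show ?thesis by linarith
  qed
  have "(\<Sum>l=1..n. real (x l)) = (\<Sum>l=1..n. real M)"
    by (rule sum.cong[OF refl]) (simp only: all)
  then have "mean n x = real M" unfolding mean_def using n by simp
  then show ?thesis unfolding shape_def using all by (simp add: fun_eq_iff)
qed

lemma Min_less_Max_if_deficit_pos:
  assumes "0 < deficit n x" shows "Min (x ` {1..n}) < Max (x ` {1..n})"
proof -
  obtain k where k: "k \<in> {1..n}" "0 < Max (x ` {1..n}) - x k"
    using assms unfolding deficit_def by (metis not_gr0 sum.neutral)
  have "Min (x ` {1..n}) \<le> x k" using k(1) by simp
  then show ?thesis using k(2) by linarith
qed

lemma Max_store:
  assumes "finite A" "l \<in> A" "x l < Max (x ` A)"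
  shows "Max (store x l ` A) = Max (x ` A)"
proof (rule Max_eqI)
  show "finite (store x l ` A)" using assms(1) by simp
  show "y \<le> Max (x ` A)" if y: "y \<in> store x l ` A" for y
  proof -
    obtain k where k: "k \<in> A" "y = store x l k" using y by blast
    have "x k \<le> Max (x ` A)" using k(1) assms(1) by simp
    then show ?thesis using k assms(3) by (cases "k = l") (auto simp: store_def)
  qed
  have "x ` A \<noteq> {}" using assms(2) by blast
  then have "Max (x ` A) \<in> x ` A" using assms(1) by (intro Max_in) auto
  then obtain k where k: "k \<in> A" "x k = Max (x ` A)" by auto
  then have "store x l k = Max (x ` A)" using assms(3) by (auto simp: store_def)
  then show "Max (x ` A) \<in> store x l ` A" using k(1) by (metis image_eqI)
qed

lemma deficit_store:
  assumes l: "l \<in> {1..n}" and below: "x l < Max (x ` {1..n})"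
  shows "Suc (deficit n (store x l)) = deficit n x"
proof -
  let ?A = "{1..n}" and ?M = "Max (x ` {1..n})"
  define r where "r = (\<Sum>k\<in>?A - {l}. ?M - x k)"
  have "deficit n x = (?M - x l) + r"
    unfolding deficit_def r_def by (rule sum.remove) (use l in auto)
  moreover have "deficit n (store x l) = (?M - store x l l) + (\<Sum>k\<in>?A - {l}. ?M - store x l k)"
    unfolding deficit_def Max_store[OF finite_atLeastAtMost l below] by (rule sum.remove) (use l in auto)
  moreover have "(\<Sum>k\<in>?A - {l}. ?M - store x l k) = r"
    unfolding r_def by (rule sum.cong) (auto simp: store_def)
  ultimately show ?thesis using below by (simp add: store_def)
qed

lemma deficit_store_le:
  assumes l: "l \<in> {1..n}"
  shows "deficit n (store x l) \<le> n * (Max (x ` {1..n}) - Min (x ` {1..n}) + 1)"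
proof -
  let ?A = "{1..n}" and ?M = "Max (x ` {1..n})" and ?m = "Min (x ` {1..n})"
  have "y \<le> ?M + 1" if y: "y \<in> store x l ` ?A" for y
  proof -
    obtain k where k: "k \<in> ?A" "y = store x l k" using y by blast
    have "x k \<le> ?M" "x l \<le> ?M" using k(1) l by auto
    then show ?thesis using k(2) by (auto simp: store_def)
  qed
  then have max_le: "Max (store x l ` ?A) \<le> ?M + 1"
    using l by (subst Max_le_iff) auto
  have "deficit n (store x l) \<le> of_nat (card ?A) * (?M - ?m + 1)"
    unfolding deficit_def
  proof (rule sum_bounded_above)
    fix k assume k: "k \<in> ?A"
    have "?m \<le> x k" "x k \<le> store x l k" using k by (auto simp: store_def)
    then show "Max (store x l ` ?A) - store x l k \<le> ?M - ?m + 1" using max_le by linarith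
  qed
  then show ?thesis by simp
qed

section \<open>Routing policies with negative drift\<close>

text \<open>The properties of JSQ and \<open>\<epsilon>\<close>-PSERP that the stability proof uses: \<open>P_drift\<close> is the
  negative drift relative to the equilibrium routing \<open>\<alpha>\<close>, and \<open>P_jmin\<close> lets the chain reach the
  zero shape.\<close>

locale stable_policy =
  fixes n K :: nat and S :: "nat \<Rightarrow> nat list" and lam :: "nat \<Rightarrow> real"
    and \<alpha> :: "nat \<Rightarrow> nat \<Rightarrow> real" and P :: "(nat \<Rightarrow> nat) \<Rightarrow> nat \<Rightarrow> nat \<Rightarrow> real"
    and \<kappa> p0 :: real
  assumes storage_model: "storage_model n K S lam"
    and connected: "graph_connected n K S"
    and positive_solution: "positive_solution n K S lam \<alpha>"
    and P_nonneg: "\<And>x i j. i \<in> {1..K} \<Longrightarrow> j < kap S i \<Longrightarrow> 0 \<le> P x i j"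
    and P_sum: "\<And>x i. i \<in> {1..K} \<Longrightarrow> (\<Sum>j<kap S i. P x i j) = 1"
    and \<kappa>_pos: "\<kappa> > 0"
    and P_drift: "\<And>x i. i \<in> {1..K} \<Longrightarrow>
        lam i * (\<Sum>j<kap S i. P x i j * real (x (S i ! j)))
          \<le> (\<Sum>j<kap S i. \<alpha> i j * real (x (S i ! j))) - \<kappa> * nbhd_spread S x i"
    and p0_pos: "p0 > 0"
    and P_jmin: "\<And>x i. i \<in> {1..K} \<Longrightarrow> p0 \<le> P x i (jmin S x i)"
begin

lemma K_ge_1: "K \<ge> 1"
  and lam_pos: "i \<in> {1..K} \<Longrightarrow> lam i > 0"
  and sum_lam: "(\<Sum>i=1..K. lam i) = 1"
  and nodes_covered: "(\<Union>i\<in>{1..K}. set (S i)) = {1..n}"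
  and nbhd_nonempty: "i \<in> {1..K} \<Longrightarrow> S i \<noteq> []"
  and nbhd_subset: "i \<in> {1..K} \<Longrightarrow> set (S i) \<subseteq> {1..n}"
  using storage_model unfolding storage_model_def by auto

lemma n_ge_1: "n \<ge> 1"
  using storage_model by (rule storage_model_n_ge_1)

lemma nth_nbhd: "i \<in> {1..K} \<Longrightarrow> j < kap S i \<Longrightarrow> S i ! j \<in> {1..n}"
  using storage_model by (rule storage_model_nth_mem)

abbreviation step where "step \<equiv> step_pmf K S lam P"

abbreviation tau where "tau \<equiv> tau_prob n step"

definition step_mean :: "((nat \<Rightarrow> nat) \<Rightarrow> real) \<Rightarrow> (nat \<Rightarrow> nat) \<Rightarrow> real" where
  "step_mean f x = (\<Sum>i=1..K. lam i * (\<Sum>j<kap S i. P x i j * f (store x (S i ! j))))"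

lemma expectation_step:
  fixes g :: "(nat \<Rightarrow> nat) \<Rightarrow> real"
  assumes "\<And>y. \<bar>g y\<bar> \<le> B"
  shows "measure_pmf.expectation (step x) g = step_mean g x"
proof -
  have route: "measure_pmf.expectation (map_pmf (\<lambda>j. x(S i ! j := Suc (x (S i ! j)))) (route_pmf S P x i)) g
     = (\<Sum>j<kap S i. P x i j * g (store x (S i ! j)))" if i: "i \<in> {1..K}" for i
  proof -
    have "measure_pmf.expectation (route_pmf S P x i) (\<lambda>j. g (x(S i ! j := Suc (x (S i ! j)))))
        = (\<Sum>j<kap S i. (if j < kap S i then P x i j else 0) * g (x(S i ! j := Suc (x (S i ! j)))))"
      unfolding route_pmf_def
      by (rule expectation_embed_pmf_finite) (use P_nonneg[OF i] P_sum[OF i] in auto)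
    then show ?thesis by (simp add: store_def)
  qed
  have "measure_pmf.expectation (step x) g = (\<integral>i. measure_pmf.expectation
      (map_pmf (\<lambda>j. x(S i ! j := Suc (x (S i ! j)))) (route_pmf S P x i)) g \<partial>measure_pmf (nbhd_pmf K lam))"
    unfolding step_pmf_def by (rule expectation_bind_pmf_bounded[OF assms])
  also have "\<dots> = (\<Sum>i\<in>{1..K}. (if i \<in> {1..K} then lam i else 0) * measure_pmf.expectation
      (map_pmf (\<lambda>j. x(S i ! j := Suc (x (S i ! j)))) (route_pmf S P x i)) g)"
    unfolding nbhd_pmf_def
    by (rule expectation_embed_pmf_finite) (use lam_pos sum_lam in \<open>auto intro: less_imp_le\<close>)
  also have "\<dots> = step_mean g x" unfolding step_mean_def by (rule sum.cong) (auto simp: route[simplified])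
  finally show ?thesis .
qed

lemma step_mean_mono_on_successors:
  assumes "\<And>i j. i \<in> {1..K} \<Longrightarrow> j < kap S i \<Longrightarrow> f (store x (S i ! j)) \<le> g (store x (S i ! j))"
  shows "step_mean f x \<le> step_mean g x"
  unfolding step_mean_def
  by (auto intro!: sum_mono mult_left_mono P_nonneg assms less_imp_le[OF lam_pos])

lemma step_mean_mono: "(\<And>y. f y \<le> g y) \<Longrightarrow> step_mean f x \<le> step_mean g x"
  by (rule step_mean_mono_on_successors)

lemma step_mean_add: "step_mean (\<lambda>y. f y + g y) x = step_mean f x + step_mean g x"
  unfolding step_mean_def by (simp add: algebra_simps sum.distrib)

lemma step_mean_cmult: "step_mean (\<lambda>y. c * f y) x = c * step_mean f x"
  unfolding step_mean_def by (simp add: algebra_simps sum_distrib_left)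

lemma step_mean_const: "step_mean (\<lambda>y. c) x = c"
proof -
  have "step_mean (\<lambda>y. c) x = (\<Sum>i=1..K. lam i * c)"
    unfolding step_mean_def by (intro sum.cong) (auto simp: sum_distrib_right[symmetric] P_sum)
  then show ?thesis using sum_lam by (simp add: sum_distrib_right[symmetric])
qed

lemma step_mean_diff: "step_mean (\<lambda>y. f y - g y) x = step_mean f x - step_mean g x"
  using step_mean_add[of f "\<lambda>y. - g y" x] step_mean_cmult[of "-1" g x] by simp

lemma step_mean_sum: "finite A \<Longrightarrow> step_mean (\<lambda>y. \<Sum>k\<in>A. f k y) x = (\<Sum>k\<in>A. step_mean (f k) x)"
  by (induction A rule: finite_induct) (auto simp: step_mean_add step_mean_const[of 0, simplified])

lemma step_mean_single_successor:
  assumes f_le_1: "\<And>y. f y \<le> 1" and i0: "i0 \<in> {1..K}" and j0: "j0 < kap S i0"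
  shows "step_mean f x \<le> 1 - lam i0 * P x i0 j0 * (1 - f (store x (S i0 ! j0)))"
proof -
  let ?g = "\<lambda>i j. P x i j * (1 - f (store x (S i ! j)))"
  have g_nonneg: "i \<in> {1..K} \<Longrightarrow> j < kap S i \<Longrightarrow> 0 \<le> ?g i j" for i j
    using P_nonneg f_le_1 by simp
  have "P x i0 j0 * (1 - f (store x (S i0 ! j0))) \<le> (\<Sum>j<kap S i0. ?g i0 j)"
    using j0 g_nonneg[OF i0] by (intro member_le_sum) auto
  then have "lam i0 * (P x i0 j0 * (1 - f (store x (S i0 ! j0)))) \<le> lam i0 * (\<Sum>j<kap S i0. ?g i0 j)"
    using lam_pos[OF i0] by simp
  also have "\<dots> \<le> (\<Sum>i=1..K. lam i * (\<Sum>j<kap S i. ?g i j))"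
  proof (rule member_le_sum[OF i0])
    fix i assume i: "i \<in> {1..K} - {i0}"
    have "0 \<le> (\<Sum>j<kap S i. ?g i j)" using g_nonneg i by (intro sum_nonneg) blast
    then show "0 \<le> lam i * (\<Sum>j<kap S i. ?g i j)" using lam_pos[of i] i by simp
  qed simp
  also have "\<dots> = step_mean (\<lambda>y. 1 - f y) x" unfolding step_mean_def ..
  finally show ?thesis unfolding step_mean_diff step_mean_const by (simp add: mult.assoc)
qed

text \<open>The kernel of the chain killed when its shape hits \<open>0\<close>; \<open>survival m x\<close> is the probability
  that the shape chain started in \<open>x\<close> has not returned to \<open>0\<close> by time \<open>m\<close>.\<close>

definition killed_mean :: "((nat \<Rightarrow> nat) \<Rightarrow> real) \<Rightarrow> (nat \<Rightarrow> nat) \<Rightarrow> real" where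
  "killed_mean f = step_mean (\<lambda>y. if shape n y \<noteq> (\<lambda>_. 0) then f y else 0)"

primrec killed_iter :: "nat \<Rightarrow> ((nat \<Rightarrow> nat) \<Rightarrow> real) \<Rightarrow> (nat \<Rightarrow> nat) \<Rightarrow> real" where
  "killed_iter 0 f = f"
| "killed_iter (Suc m) f = killed_mean (killed_iter m f)"

abbreviation survival where "survival m \<equiv> killed_iter m (\<lambda>_. 1)"

lemma killed_mean_mono_on_successors:
  assumes "\<And>i j. i \<in> {1..K} \<Longrightarrow> j < kap S i \<Longrightarrow> f (store x (S i ! j)) \<le> g (store x (S i ! j))"
  shows "killed_mean f x \<le> killed_mean g x"
  unfolding killed_mean_def by (rule step_mean_mono_on_successors) (auto simp: assms)

lemma killed_mean_mono: "(\<And>y. f y \<le> g y) \<Longrightarrow> killed_mean f x \<le> killed_mean g x"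
  by (rule killed_mean_mono_on_successors)

lemma killed_mean_add: "killed_mean (\<lambda>y. f y + g y) x = killed_mean f x + killed_mean g x"
  unfolding killed_mean_def step_mean_add[symmetric] by (rule arg_cong[where f="\<lambda>h. step_mean h x"]) auto

lemma killed_mean_cmult: "killed_mean (\<lambda>y. c * f y) x = c * killed_mean f x"
  unfolding killed_mean_def step_mean_cmult[symmetric] by (rule arg_cong[where f="\<lambda>h. step_mean h x"]) auto

lemma killed_mean_le_step_mean: "(\<And>y. 0 \<le> f y) \<Longrightarrow> killed_mean f x \<le> step_mean f x"
  unfolding killed_mean_def by (rule step_mean_mono) auto

lemma killed_iter_mono: "(\<And>y. f y \<le> g y) \<Longrightarrow> killed_iter m f x \<le> killed_iter m g x"
  by (induction m arbitrary: x) (auto intro!: killed_mean_mono)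

lemma killed_iter_cmult: "killed_iter m (\<lambda>y. c * f y) x = c * killed_iter m f x"
proof (induction m arbitrary: x)
  case (Suc m)
  then have "killed_iter m (\<lambda>y. c * f y) = (\<lambda>y. c * killed_iter m f y)" by (simp add: fun_eq_iff)
  then show ?case by (simp add: killed_mean_cmult)
qed simp

lemma killed_iter_add: "killed_iter (a + b) f = killed_iter a (killed_iter b f)"
  by (induction a) auto

lemma killed_iter_nonneg: "(\<And>y. 0 \<le> f y) \<Longrightarrow> 0 \<le> killed_iter m f x"
proof (induction m arbitrary: x)
  case (Suc m)
  have "0 = step_mean (\<lambda>_. 0) x" by (simp add: step_mean_const)
  also have "\<dots> \<le> killed_mean (killed_iter m f) x"
    unfolding killed_mean_def by (rule step_mean_mono) (auto intro: Suc)
  finally show ?case by simp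
qed simp

lemma survival_nonneg: "0 \<le> survival m x"
  by (rule killed_iter_nonneg) simp

lemma survival_le_1: "survival m x \<le> 1"
proof (induction m arbitrary: x)
  case (Suc m)
  have "survival (Suc m) x \<le> killed_mean (\<lambda>_. 1) x" using Suc by (auto intro!: killed_mean_mono)
  also have "\<dots> \<le> step_mean (\<lambda>_. 1) x" by (rule killed_mean_le_step_mean) simp
  finally show ?case by (simp add: step_mean_const)
qed simp

lemma survival_Suc_le: "survival (Suc m) x \<le> survival m x"
proof (induction m arbitrary: x)
  case 0 show ?case using survival_le_1[of 1 x] by simp
next
  case (Suc m) then show ?case by (auto intro!: killed_mean_mono)
qed

lemma survival_antimono: "m \<le> m' \<Longrightarrow> survival m' x \<le> survival m x"
proof (induction m' rule: dec_induct)
  case (step k)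
  then show ?case using survival_Suc_le[of k x] by linarith
qed simp

lemma tau_0: "tau x 0 = 0"
  unfolding tau_prob_def by simp

lemma tau_nonneg: "0 \<le> tau x m"
  unfolding tau_prob_def by simp

lemma tau_Suc: "tau x (Suc m) = measure_pmf.expectation (step x)
   (\<lambda>y. measure_pmf.prob (traj step m y)
     (Cons y -` {ys. shape n (ys ! m) = (\<lambda>_. 0) \<and> (\<forall>k < m. shape n (ys ! k) \<noteq> (\<lambda>_. 0))}))"
  unfolding tau_prob_def by (simp add: prob_bind_pmf)

lemma tau_1: "tau x (Suc 0) = step_mean (\<lambda>y. if shape n y = (\<lambda>_. 0) then 1 else 0) x"
proof -
  have "tau x (Suc 0) = measure_pmf.expectation (step x) (\<lambda>y. if shape n y = (\<lambda>_. 0) then 1 else 0)"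
    unfolding tau_Suc by (intro Bochner_Integration.integral_cong) auto
  also have "\<dots> = step_mean (\<lambda>y. if shape n y = (\<lambda>_. 0) then 1 else 0) x"
    by (rule expectation_step[where B=1]) auto
  finally show ?thesis .
qed

lemma tau_Suc_Suc: "tau x (Suc (Suc m)) = killed_mean (\<lambda>y. tau y (Suc m)) x"
proof -
  have first_step: "(Cons y -` {ys. shape n (ys ! Suc m) = (\<lambda>_. 0) \<and> (\<forall>k < Suc m. shape n (ys ! k) \<noteq> (\<lambda>_. 0))})
     = (if shape n y \<noteq> (\<lambda>_. 0) then {ys. 0 < Suc m \<and> shape n (ys ! (Suc m - 1)) = (\<lambda>_. 0)
                                        \<and> (\<forall>k < Suc m - 1. shape n (ys ! k) \<noteq> (\<lambda>_. 0))} else {})" for y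
    by (auto simp: less_Suc_eq_0_disj)
  have "tau x (Suc (Suc m))
      = measure_pmf.expectation (step x) (\<lambda>y. if shape n y \<noteq> (\<lambda>_. 0) then tau y (Suc m) else 0)"
    unfolding tau_Suc[of x "Suc m"] first_step
    by (intro Bochner_Integration.integral_cong) (auto simp: tau_prob_def)
  also have "\<dots> = killed_mean (\<lambda>y. tau y (Suc m)) x"
    unfolding killed_mean_def by (rule expectation_step[where B=1]) (auto simp: tau_prob_def)
  finally show ?thesis .
qed

lemma sum_tau_plus_survival: "(\<Sum>k<Suc m. tau x k) + survival m x = 1"
proof (induction m arbitrary: x)
  case 0 then show ?case by (simp add: tau_0)
next
  case (Suc m)
  let ?hit = "\<lambda>y. if shape n y = (\<lambda>_. 0) then 1 else 0 :: real"
  let ?rest = "\<lambda>y. (\<Sum>k<m. tau y (Suc k)) + survival m y"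
  have "(\<Sum>k<m. tau x (Suc (Suc k)))
      = step_mean (\<lambda>y. \<Sum>k<m. if shape n y \<noteq> (\<lambda>_. 0) then tau y (Suc k) else 0) x"
    by (subst step_mean_sum) (auto simp: tau_Suc_Suc killed_mean_def)
  also have "\<dots> = killed_mean (\<lambda>y. \<Sum>k<m. tau y (Suc k)) x"
    unfolding killed_mean_def by (rule arg_cong[where f="\<lambda>f. step_mean f x"]) auto
  finally have "(\<Sum>k<Suc (Suc m). tau x k) = tau x (Suc 0) + killed_mean (\<lambda>y. \<Sum>k<m. tau y (Suc k)) x"
    by (simp only: sum.lessThan_Suc_shift tau_0 add_0)
  then have "(\<Sum>k<Suc (Suc m). tau x k) + survival (Suc m) x = step_mean ?hit x + killed_mean ?rest x"
    by (simp add: tau_1 killed_mean_add)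
  also have "\<dots> = step_mean (\<lambda>y. ?hit y + (if shape n y \<noteq> (\<lambda>_. 0) then ?rest y else 0)) x"
    unfolding killed_mean_def step_mean_add ..
  also have "\<dots> = step_mean (\<lambda>_. 1) x"
  proof (rule arg_cong[where f="\<lambda>f. step_mean f x"], rule ext)
    fix y
    have "?rest y = 1" using Suc.IH[of y] by (simp only: sum.lessThan_Suc_shift tau_0 add_0)
    then show "?hit y + (if shape n y \<noteq> (\<lambda>_. 0) then ?rest y else 0) = 1" by simp
  qed
  finally show ?case by (simp add: step_mean_const)
qed

lemma tau_Suc_le_survival: "tau x (Suc m) \<le> survival m x"
  using sum_tau_plus_survival[where m=m and x=x] sum_tau_plus_survival[where m="Suc m" and x=x]
    survival_nonneg[of "Suc m" x]
  by simp


section \<open>Lyapunov drift of the shape\<close>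

lemma alpha_weighted_shape_sum: "(\<Sum>i=1..K. \<Sum>j<kap S i. \<alpha> i j * shape n x (S i ! j)) = 0"
proof -
  let ?z = "shape n x" and ?\<delta> = "\<lambda>i j l. if l = S i ! j then 1 else 0 :: real"
  have node_sum: "\<alpha> i j * ?z (S i ! j) = (\<Sum>l=1..n. ?z l * (\<alpha> i j * ?\<delta> i j l))"
    if "i \<in> {1..K}" "j < kap S i" for i j
  proof -
    have "(\<Sum>l=1..n. ?z l * (\<alpha> i j * ?\<delta> i j l)) = (\<Sum>l=1..n. if l = S i ! j then \<alpha> i j * ?z (S i ! j) else 0)"
      by (intro sum.cong) auto
    also have "\<dots> = \<alpha> i j * ?z (S i ! j)" using nth_nbhd[OF that] by simp
    finally show ?thesis ..
  qed
  have "(\<Sum>i=1..K. \<Sum>j<kap S i. \<alpha> i j * ?z (S i ! j))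
      = (\<Sum>i=1..K. \<Sum>j<kap S i. \<Sum>l=1..n. ?z l * (\<alpha> i j * ?\<delta> i j l))"
    using node_sum by (intro sum.cong refl) auto
  also have "\<dots> = (\<Sum>l=1..n. ?z l * (\<Sum>i=1..K. \<Sum>j<kap S i. \<alpha> i j * ?\<delta> i j l))"
    by (simp only: sum.swap[where B="{1..n}" and A="{..<kap S _}"] sum.swap[where B="{1..n}" and A="{1..K}"]
                   sum_distrib_left)
  also have "\<dots> = (\<Sum>l=1..n. ?z l) / real n"
    using positive_solution unfolding positive_solution_def by (simp add: sum_divide_distrib)
  also have "\<dots> = 0" using sum_shape[OF n_ge_1] by simp
  finally show ?thesis .
qed

lemma nbhd_drift: assumes i: "i \<in> {1..K}"
  shows "lam i * (\<Sum>j<kap S i. P x i j * shape n x (S i ! j))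
     \<le> (\<Sum>j<kap S i. \<alpha> i j * shape n x (S i ! j)) - \<kappa> * nbhd_spread S x i"
proof -
  have shift: "(\<Sum>j<kap S i. w j * shape n x (S i ! j))
      = (\<Sum>j<kap S i. w j * real (x (S i ! j))) - (\<Sum>j<kap S i. w j) * mean n x" for w
  proof -
    have "(\<Sum>j<kap S i. w j * shape n x (S i ! j))
        = (\<Sum>j<kap S i. w j * real (x (S i ! j)) - w j * mean n x)"
      by (intro sum.cong refl) (simp add: shape_apply[OF nth_nbhd[OF i]] right_diff_distrib)
    then show ?thesis by (simp add: sum_subtractf sum_distrib_right)
  qed
  have "(\<Sum>j<kap S i. \<alpha> i j) = lam i"
    using positive_solution i unfolding positive_solution_def by auto
  then show ?thesis
    using P_drift[OF i, of x] unfolding shift P_sum[OF i] by (simp add: right_diff_distrib)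
qed

lemma total_drift:
  "(\<Sum>i=1..K. lam i * (\<Sum>j<kap S i. P x i j * shape n x (S i ! j))) \<le> - \<kappa> * spread n x"
proof -
  have "(\<Sum>i=1..K. lam i * (\<Sum>j<kap S i. P x i j * shape n x (S i ! j)))
     \<le> (\<Sum>i=1..K. (\<Sum>j<kap S i. \<alpha> i j * shape n x (S i ! j)) - \<kappa> * nbhd_spread S x i)"
    by (intro sum_mono nbhd_drift) auto
  also have "\<dots> = - \<kappa> * (\<Sum>i=1..K. nbhd_spread S x i)"
    using alpha_weighted_shape_sum[of x] by (simp add: sum_subtractf sum_distrib_left sum_negf)
  also have "\<dots> \<le> - \<kappa> * spread n x"
    using spread_le_sum_nbhd_spread[OF storage_model connected, of x] \<kappa>_pos by simp
  finally show ?thesis .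
qed

lemma step_mean_shape_sq: "step_mean (shape_sq n) x \<le> shape_sq n x + 1 - 2 * \<kappa> * spread n x"
proof -
  let ?c = "shape_sq n x + 1 - 1 / real n"
  let ?d = "\<lambda>i. \<Sum>j<kap S i. P x i j * shape n x (S i ! j)"
  have nbhd: "(\<Sum>j<kap S i. P x i j * shape_sq n (store x (S i ! j))) = ?c + 2 * ?d i"
    if i: "i \<in> {1..K}" for i
  proof -
    have "(\<Sum>j<kap S i. P x i j * shape_sq n (store x (S i ! j)))
        = (\<Sum>j<kap S i. P x i j * ?c + 2 * (P x i j * shape n x (S i ! j)))"
      by (intro sum.cong refl) (simp add: shape_sq_store[OF nth_nbhd[OF i]] algebra_simps)
    also have "\<dots> = ?c + 2 * ?d i"
      by (simp add: sum.distrib sum_distrib_left[symmetric] sum_distrib_right[symmetric] P_sum[OF i])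
    finally show ?thesis .
  qed
  have "step_mean (shape_sq n) x = (\<Sum>i=1..K. ?c * lam i + 2 * (lam i * ?d i))"
    unfolding step_mean_def by (intro sum.cong refl) (simp add: nbhd algebra_simps)
  also have "\<dots> = ?c + 2 * (\<Sum>i=1..K. lam i * ?d i)"
    by (simp only: sum.distrib sum_distrib_left[symmetric] sum_lam mult_1_right)
  also have "\<dots> \<le> ?c + 2 * (- \<kappa> * spread n x)"
    using total_drift[of x] by simp
  also have "\<dots> \<le> shape_sq n x + 1 - 2 * \<kappa> * spread n x" by simp
  finally show ?thesis .
qed

text \<open>The square root is bounded by its tangent at the current value of \<open>shape_sq\<close>.\<close>

lemma step_mean_shape_norm:
  assumes far: "sqrt (real n) / \<kappa> \<le> shape_norm n x"
  shows "step_mean (shape_norm n) x \<le> shape_norm n x - \<kappa> / (2 * sqrt (real n))"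
proof -
  let ?w = "shape_norm n x" and ?r = "sqrt (real n)"
  have r: "?r > 0" using n_ge_1 by simp
  have w: "?w > 0" using far r \<kappa>_pos by (smt (verit) divide_pos_pos)
  have V: "shape_sq n x > 0" using w shape_norm_squared[of n x] by (metis zero_less_power2 less_irrefl)
  have tangent: "shape_norm n y \<le> (?w - shape_sq n x / (2 * ?w)) + (1 / (2 * ?w)) * shape_sq n y" for y
    using sqrt_le_tangent[OF V shape_sq_nonneg[of n y]] unfolding shape_norm_def
    by (simp add: diff_divide_distrib)
  have "?w / ?r \<le> spread n x"
    using shape_norm_le_spread[OF n_ge_1, of x] r by (simp add: divide_le_eq mult.commute)
  then have sq_drift: "step_mean (shape_sq n) x - shape_sq n x \<le> 1 - 2 * \<kappa> * (?w / ?r)"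
    using step_mean_shape_sq[of x] \<kappa>_pos by (smt (verit) mult_left_mono)
  have "step_mean (shape_norm n) x
      \<le> step_mean (\<lambda>y. (?w - shape_sq n x / (2 * ?w)) + (1 / (2 * ?w)) * shape_sq n y) x"
    by (rule step_mean_mono[OF tangent])
  also have "\<dots> = ?w + (step_mean (shape_sq n) x - shape_sq n x) / (2 * ?w)"
    by (simp only: step_mean_add step_mean_cmult step_mean_const) (simp add: diff_divide_distrib)
  also have "\<dots> \<le> ?w + (1 - 2 * \<kappa> * (?w / ?r)) / (2 * ?w)"
    using sq_drift w by (simp add: divide_right_mono)
  also have "\<dots> = ?w + 1 / (2 * ?w) - \<kappa> / ?r"
    using w r by (simp add: field_simps)
  also have "1 / (2 * ?w) \<le> \<kappa> / (2 * ?r)"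
    using far w r \<kappa>_pos by (simp add: field_simps)
  finally show ?thesis by simp
qed

lemma step_mean_exp_shape_norm:
  fixes \<theta> :: real
  assumes \<theta>: "0 < \<theta>" "\<theta> \<le> 1" "\<theta> \<le> \<kappa> / (4 * sqrt (real n))"
    and far: "sqrt (real n) / \<kappa> \<le> shape_norm n x"
  shows "step_mean (\<lambda>y. exp (\<theta> * shape_norm n y)) x
      \<le> (1 - \<theta> * (\<kappa> / (4 * sqrt (real n)))) * exp (\<theta> * shape_norm n x)"
proof -
  let ?w = "shape_norm n x" and ?d = "\<kappa> / (4 * sqrt (real n))"
  let ?E = "exp (\<theta> * ?w)"
  have "step_mean (\<lambda>y. exp (\<theta> * shape_norm n y)) x
      \<le> step_mean (\<lambda>y. ?E * (1 + \<theta> * (shape_norm n y - ?w) + \<theta>\<^sup>2)) x"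
  proof (rule step_mean_mono_on_successors)
    fix i j assume "i \<in> {1..K}" "j < kap S i"
    let ?u = "shape_norm n (store x (S i ! j)) - ?w"
    have u: "\<bar>?u\<bar> \<le> 1" using shape_norm_store[OF nth_nbhd] \<open>i \<in> _\<close> \<open>j < _\<close> by blast
    then have "\<bar>\<theta> * ?u\<bar> \<le> 1" using \<theta> by (simp add: abs_mult mult_le_one)
    then have "exp (\<theta> * ?u) \<le> 1 + \<theta> * ?u + (\<theta> * ?u)\<^sup>2" by (rule exp_le_quadratic)
    moreover have "(\<theta> * ?u)\<^sup>2 \<le> \<theta>\<^sup>2"
    proof -
      have "?u\<^sup>2 \<le> 1" using u by (metis abs_ge_zero power2_abs power_mono one_power2)
      then show ?thesis unfolding power_mult_distrib by (intro mult_left_le) auto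
    qed
    ultimately have "?E * exp (\<theta> * ?u) \<le> ?E * (1 + \<theta> * ?u + \<theta>\<^sup>2)" by simp
    then show "exp (\<theta> * shape_norm n (store x (S i ! j))) \<le> ?E * (1 + \<theta> * ?u + \<theta>\<^sup>2)"
      by (simp add: exp_add[symmetric] algebra_simps)
  qed
  also have "\<dots> = step_mean (\<lambda>y. ?E * (1 - \<theta> * ?w + \<theta>\<^sup>2) + (?E * \<theta>) * shape_norm n y) x"
    by (intro arg_cong[where f="\<lambda>h. step_mean h x"]) (auto simp: algebra_simps)
  also have "\<dots> = ?E * (1 - \<theta> * ?w + \<theta>\<^sup>2) + (?E * \<theta>) * step_mean (shape_norm n) x"
    by (simp only: step_mean_add step_mean_cmult step_mean_const)
  also have "\<dots> \<le> ?E * (1 - \<theta> * ?w + \<theta>\<^sup>2) + (?E * \<theta>) * (?w - 2 * ?d)"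
    using step_mean_shape_norm[OF far] \<theta> by (intro add_left_mono mult_left_mono) auto
  also have "\<dots> = ?E * (1 - \<theta> * ?d - \<theta> * (?d - \<theta>))" by (simp add: algebra_simps power2_eq_square)
  also have "\<dots> \<le> ?E * (1 - \<theta> * ?d)" using \<theta> by (intro mult_left_mono) auto
  finally show ?thesis by (simp add: mult.commute)
qed


section \<open>Reaching the zero shape\<close>

definition reach_prob :: real where
  "reach_prob = min 1 (Min (lam ` {1..K}) * p0)"

lemma reach_prob_pos: "0 < reach_prob" and reach_prob_le_1: "reach_prob \<le> 1"
proof -
  have "finite (lam ` {1..K})" "lam ` {1..K} \<noteq> {}" using K_ge_1 by auto
  then have "0 < Min (lam ` {1..K})" using lam_pos by (auto simp: Min_gr_iff)
  then show "0 < reach_prob" "reach_prob \<le> 1" unfolding reach_prob_def using p0_pos by auto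
qed

lemma global_min_successor:
  "\<exists>i\<in>{1..K}. \<exists>j<kap S i. x (S i ! j) = Min (x ` {1..n}) \<and> reach_prob \<le> lam i * P x i j"
proof -
  have fin: "finite (x ` {1..n})" "x ` {1..n} \<noteq> {}" using n_ge_1 by auto
  obtain l where l: "l \<in> {1..n}" "x l = Min (x ` {1..n})" using Min_in[OF fin] by auto
  then obtain i where i: "i \<in> {1..K}" "l \<in> set (S i)" using nodes_covered by blast
  have "Min (x ` set (S i)) = Min (x ` {1..n})"
  proof (rule antisym)
    show "Min (x ` set (S i)) \<le> Min (x ` {1..n})" using i(2) l(2) by (metis Min_le finite_imageI finite_set image_eqI)
    show "Min (x ` {1..n}) \<le> Min (x ` set (S i))" using i(2) nbhd_subset[OF i(1)] fin by (intro Min_antimono) auto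
  qed
  moreover have "jmin S x i < kap S i \<and> x (S i ! jmin S x i) = Min (x ` set (S i))"
    using jmin_spec[where S=S and i=i and x=x] nbhd_nonempty[OF i(1)] by blast
  moreover have "Min (lam ` {1..K}) * p0 \<le> lam i * P x i (jmin S x i)"
    using i(1) P_jmin[OF i(1), of x] p0_pos lam_pos[OF i(1)]
    by (intro mult_mono) auto
  then have "reach_prob \<le> lam i * P x i (jmin S x i)" unfolding reach_prob_def by linarith
  ultimately show ?thesis using i(1) by auto
qed

lemma survival_Suc_le_via_successor:
  assumes i: "i \<in> {1..K}" and j: "j < kap S i" and r: "r \<le> lam i * P x i j" and "0 \<le> r"
    and succ: "(if shape n (store x (S i ! j)) \<noteq> (\<lambda>_. 0) then survival T (store x (S i ! j)) else 0) \<le> 1 - r ^ T"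
  shows "survival (Suc T) x \<le> 1 - r ^ Suc T"
proof -
  let ?f = "\<lambda>y. if shape n y \<noteq> (\<lambda>_. 0) then survival T y else 0"
  have "survival (Suc T) x = step_mean ?f x" by (simp add: killed_mean_def)
  also have "\<dots> \<le> 1 - lam i * P x i j * (1 - ?f (store x (S i ! j)))"
    by (rule step_mean_single_successor[OF _ i j]) (simp add: survival_le_1)
  also have "\<dots> \<le> 1 - r * r ^ T"
    using succ r \<open>0 \<le> r\<close> by (smt (verit) mult_mono zero_le_power)
  finally show ?thesis by simp
qed

text \<open>Sending each arrival to a globally shortest queue lowers the deficit by one, and the chain
  does so with probability at least reach_prob per step; the shape is 0 once the deficit is.\<close>

lemma survival_le_deficit:
  "deficit n x = T \<Longrightarrow> (if shape n x \<noteq> (\<lambda>_. 0) then survival T x else 0) \<le> 1 - reach_prob ^ T"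
proof (induction T arbitrary: x)
  case 0 then show ?case using shape_eq_0_if_deficit_eq_0[OF n_ge_1] by simp
next
  case (Suc T)
  show ?case
  proof (cases "shape n x = (\<lambda>_. 0)")
    case True then show ?thesis
      using reach_prob_pos reach_prob_le_1 by (simp add: power_le_one mult_le_one)
  next
    case False
    obtain i j where ij: "i \<in> {1..K}" "j < kap S i" "x (S i ! j) = Min (x ` {1..n})"
        "reach_prob \<le> lam i * P x i j"
      using global_min_successor[of x] by auto
    have "Min (x ` {1..n}) < Max (x ` {1..n})"
      using Suc.prems by (intro Min_less_Max_if_deficit_pos) simp
    then have "deficit n (store x (S i ! j)) = T"
      using deficit_store[OF nth_nbhd[OF ij(1,2)], of x] ij(3) Suc.prems by simp
    then show ?thesis
      using survival_Suc_le_via_successor[OF ij(1,2,4)] Suc.IH reach_prob_pos False by simp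
  qed
qed

lemma survival_le_spread:
  "\<exists>T. T \<le> n * (Max (x ` {1..n}) - Min (x ` {1..n}) + 1) \<and> survival (Suc T) x \<le> 1 - reach_prob ^ Suc T"
proof -
  obtain i j where ij: "i \<in> {1..K}" "j < kap S i" "reach_prob \<le> lam i * P x i j"
    using global_min_successor[of x] by auto
  define T where "T = deficit n (store x (S i ! j))"
  have "survival (Suc T) x \<le> 1 - reach_prob ^ Suc T"
    by (rule survival_Suc_le_via_successor[OF ij])
       (use reach_prob_pos survival_le_deficit[of "store x (S i ! j)" T] T_def in auto)
  moreover have "T \<le> n * (Max (x ` {1..n}) - Min (x ` {1..n}) + 1)"
    unfolding T_def by (rule deficit_store_le[OF nth_nbhd[OF ij(1,2)]])
  ultimately show ?thesis by blast
qed


section \<open>Geometric tail of the return time\<close>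

lemma killed_iter_exp_shape_norm:
  fixes \<theta> :: real assumes "0 < \<theta>"
  shows "killed_iter m (\<lambda>y. exp (\<theta> * shape_norm n y)) x \<le> exp (\<theta> * (shape_norm n x + real m)) * survival m x"
proof (induction m arbitrary: x)
  case (Suc m)
  have "killed_iter (Suc m) (\<lambda>y. exp (\<theta> * shape_norm n y)) x
      \<le> killed_mean (\<lambda>y. exp (\<theta> * (shape_norm n y + real m)) * survival m y) x"
    using Suc.IH by (simp add: killed_mean_mono)
  also have "\<dots> \<le> killed_mean (\<lambda>y. exp (\<theta> * (shape_norm n x + real (Suc m))) * survival m y) x"
  proof (rule killed_mean_mono_on_successors)
    fix i j assume "i \<in> {1..K}" "j < kap S i"
    then have "shape_norm n (store x (S i ! j)) \<le> shape_norm n x + 1"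
      using shape_norm_store[OF nth_nbhd] by (smt (verit))
    then have "exp (\<theta> * (shape_norm n (store x (S i ! j)) + real m)) \<le> exp (\<theta> * (shape_norm n x + real (Suc m)))"
      using assms by simp
    then show "exp (\<theta> * (shape_norm n (store x (S i ! j)) + real m)) * survival m (store x (S i ! j))
        \<le> exp (\<theta> * (shape_norm n x + real (Suc m))) * survival m (store x (S i ! j))"
      by (intro mult_right_mono survival_nonneg)
  qed
  also have "\<dots> = exp (\<theta> * (shape_norm n x + real (Suc m))) * survival (Suc m) x"
    by (simp add: killed_mean_cmult)
  finally show ?case .
qed simp

text \<open>The induction peels off one contracting block, of length \<open>1\<close> or \<open>N\<close>, at a time.\<close>

lemma killed_iter_geometric:
  assumes \<rho>: "0 < \<rho>" and "1 \<le> N" and "0 \<le> c" and G: "\<And>y. 0 \<le> G y"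
    and initial: "\<And>m x. m < N \<Longrightarrow> killed_iter m G x \<le> c * \<rho> ^ m * G x"
    and contract: "\<And>x. killed_iter 1 G x \<le> \<rho> * G x \<or> killed_iter N G x \<le> \<rho> ^ N * G x"
  shows "killed_iter m G x \<le> c * \<rho> ^ m * G x"
proof (induction m arbitrary: x rule: less_induct)
  case (less m)
  show ?case
  proof (cases "m < N")
    case True then show ?thesis by (rule initial)
  next
    case False
    have block: "killed_iter m G x \<le> c * \<rho> ^ m * G x"
      if k: "1 \<le> k" "k \<le> m" and hk: "killed_iter k G x \<le> \<rho> ^ k * G x" for k
    proof -
      have "killed_iter m G x = killed_iter k (killed_iter (m - k) G) x"
        using killed_iter_add[of k "m - k" G] k by simp
      also have "\<dots> \<le> killed_iter k (\<lambda>y. (c * \<rho> ^ (m - k)) * G y) x"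
        by (rule killed_iter_mono) (use less.IH k in auto)
      also have "\<dots> = (c * \<rho> ^ (m - k)) * killed_iter k G x" by (rule killed_iter_cmult)
      also have "\<dots> \<le> (c * \<rho> ^ (m - k)) * (\<rho> ^ k * G x)"
        using hk \<open>0 \<le> c\<close> \<rho> by (intro mult_left_mono) auto
      also have "\<dots> = c * \<rho> ^ m * G x" using k by (simp add: power_add[symmetric] algebra_simps)
      finally show ?thesis .
    qed
    show ?thesis using contract[of x] block[of 1] block[of N] False \<open>1 \<le> N\<close> by auto
  qed
qed

lemma survival_le_on_ball:
  assumes "shape_norm n x \<le> R"
  shows "survival (n * (nat \<lceil>2 * R\<rceil> + 1) + 1) x \<le> 1 - reach_prob ^ (n * (nat \<lceil>2 * R\<rceil> + 1) + 1)"
proof -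
  let ?N = "n * (nat \<lceil>2 * R\<rceil> + 1) + 1" and ?d = "Max (x ` {1..n}) - Min (x ` {1..n})"
  obtain T where T: "T \<le> n * (?d + 1)" "survival (Suc T) x \<le> 1 - reach_prob ^ Suc T"
    using survival_le_spread[of x] by blast
  have "Min (x ` {1..n}) \<le> x 1" "x 1 \<le> Max (x ` {1..n})" using n_ge_1 by auto
  then have "real ?d = spread n x" unfolding spread_def by simp
  also have "\<dots> \<le> 2 * R" using spread_le_shape_norm[OF n_ge_1, of x] assms by simp
  finally have "?d \<le> nat \<lceil>2 * R\<rceil>" by linarith
  then have "n * (?d + 1) \<le> n * (nat \<lceil>2 * R\<rceil> + 1)" by (intro mult_le_mono2) simp
  then have "T \<le> n * (nat \<lceil>2 * R\<rceil> + 1)" by (rule le_trans[OF T(1)])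
  then have "Suc T \<le> ?N" by simp
  then have "survival ?N x \<le> survival (Suc T) x" by (rule survival_antimono)
  also have "\<dots> \<le> 1 - reach_prob ^ Suc T" by (rule T(2))
  also have "\<dots> \<le> 1 - reach_prob ^ ?N"
    using power_decreasing[OF \<open>Suc T \<le> ?N\<close>, of reach_prob] reach_prob_pos reach_prob_le_1 by simp
  finally show ?thesis .
qed

lemma killed_iter_exp_shape_norm_le:
  fixes \<theta> :: real assumes "0 < \<theta>"
  shows "killed_iter m (\<lambda>y. exp (\<theta> * shape_norm n y)) x \<le> exp (\<theta> * real m) * exp (\<theta> * shape_norm n x)"
proof -
  have "killed_iter m (\<lambda>y. exp (\<theta> * shape_norm n y)) x \<le> exp (\<theta> * (shape_norm n x + real m)) * survival m x"
    by (rule killed_iter_exp_shape_norm[OF assms])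
  also have "\<dots> \<le> exp (\<theta> * (shape_norm n x + real m))"
    using survival_le_1[of m x] by (intro mult_left_le) auto
  finally show ?thesis by (simp add: algebra_simps exp_add)
qed

text \<open>Inside the ball the zero shape is hit within \<open>N\<close> steps with probability at least \<open>\<eta>\<close>; for
  \<open>\<theta>\<close> small this outweighs the growth of \<open>exp (\<theta> * shape_norm n)\<close> over those steps.\<close>

lemma killed_iter_exp_shape_norm_on_ball:
  fixes \<theta> \<eta> \<rho> R :: real
  assumes ball: "shape_norm n x \<le> R" and \<theta>: "0 < \<theta>" "\<theta> * (R + real N) \<le> ln (1 + \<eta> / 2)"
    and hit: "survival N x \<le> 1 - \<eta>" and \<eta>: "0 < \<eta>" "\<eta> \<le> 1" and N: "1 \<le> N"
    and \<rho>: "1 - \<eta> / (2 * real N) \<le> \<rho>"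
  shows "killed_iter N (\<lambda>y. exp (\<theta> * shape_norm n y)) x \<le> \<rho> ^ N * exp (\<theta> * shape_norm n x)"
proof -
  have "killed_iter N (\<lambda>y. exp (\<theta> * shape_norm n y)) x \<le> exp (\<theta> * (shape_norm n x + real N)) * survival N x"
    by (rule killed_iter_exp_shape_norm[OF \<theta>(1)])
  also have "\<dots> \<le> exp (\<theta> * (R + real N)) * (1 - \<eta>)"
    using ball \<theta> hit survival_nonneg[of N x] by (intro mult_mono) auto
  also have "\<dots> \<le> (1 + \<eta> / 2) * (1 - \<eta>)"
  proof (rule mult_right_mono)
    have "exp (\<theta> * (R + real N)) \<le> exp (ln (1 + \<eta> / 2))" using \<theta>(2) by simp
    then show "exp (\<theta> * (R + real N)) \<le> 1 + \<eta> / 2" using \<eta> by simp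
  qed (use \<eta> in simp)
  also have "\<dots> \<le> 1 - \<eta> / 2" using \<eta> by (simp add: algebra_simps power2_eq_square)
  also have "\<dots> = 1 + real N * (- (\<eta> / (2 * real N)))" using N by simp
  also have "\<dots> \<le> (1 + (- (\<eta> / (2 * real N)))) ^ N"
    by (rule Bernoulli_inequality) (use \<eta> N in \<open>simp add: divide_le_eq\<close>)
  also have "\<dots> \<le> \<rho> ^ N"
    by (rule power_mono) (use \<rho> \<eta> N in \<open>auto simp: divide_le_eq\<close>)
  also have "\<dots> \<le> \<rho> ^ N * exp (\<theta> * shape_norm n x)"
  proof -
    have "\<eta> / (2 * real N) \<le> 1" using \<eta> N by (simp add: divide_le_eq)
    then have "0 \<le> \<rho> ^ N" using \<rho> by simp
    moreover have "1 \<le> exp (\<theta> * shape_norm n x)" using \<theta>(1) shape_norm_nonneg[of n x] by simp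
    ultimately show ?thesis using mult_left_mono[of 1 "exp (\<theta> * shape_norm n x)" "\<rho> ^ N"] by simp
  qed
  finally show ?thesis .
qed

lemma survival_geometric: "\<exists>C \<rho>. 0 < \<rho> \<and> \<rho> < 1 \<and> (\<forall>m x. survival m x \<le> C x * \<rho> ^ m)"
proof -
  define R where "R = sqrt (real n) / \<kappa>"
  define d where "d = \<kappa> / (4 * sqrt (real n))"
  define N where "N = n * (nat \<lceil>2 * R\<rceil> + 1) + 1"
  define \<eta> where "\<eta> = reach_prob ^ N"
  define \<theta> where "\<theta> = min 1 (min d (ln (1 + \<eta> / 2) / (R + real N)))"
  define \<rho> where "\<rho> = 1 - min (\<theta> * d) (\<eta> / (2 * real N))"
  define G where "G y = exp (\<theta> * shape_norm n y)" for y
  have R: "0 < R" and d: "0 < d" unfolding R_def d_def using n_ge_1 \<kappa>_pos by auto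
  have N: "1 \<le> N" unfolding N_def by simp
  have \<eta>: "0 < \<eta>" "\<eta> \<le> 1" unfolding \<eta>_def using reach_prob_pos reach_prob_le_1 by (auto simp: power_le_one)
  have \<theta>: "0 < \<theta>" "\<theta> \<le> 1" "\<theta> \<le> d" "\<theta> * (R + real N) \<le> ln (1 + \<eta> / 2)"
  proof -
    have "0 < ln (1 + \<eta> / 2) / (R + real N)" using \<eta> R by simp
    then show "0 < \<theta>" "\<theta> \<le> 1" "\<theta> \<le> d" unfolding \<theta>_def using d by auto
    have "\<theta> \<le> ln (1 + \<eta> / 2) / (R + real N)" unfolding \<theta>_def by simp
    then show "\<theta> * (R + real N) \<le> ln (1 + \<eta> / 2)" using R by (simp add: le_divide_eq)
  qed
  have \<rho>: "0 < \<rho>" "\<rho> < 1" "1 - \<theta> * d \<le> \<rho>" "1 - \<eta> / (2 * real N) \<le> \<rho>"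
  proof -
    have "\<eta> / (2 * real N) \<le> 1 / 2" using \<eta> N by (simp add: divide_le_eq)
    then have "min (\<theta> * d) (\<eta> / (2 * real N)) \<le> 1 / 2" by linarith
    moreover have "0 < min (\<theta> * d) (\<eta> / (2 * real N))" using \<theta> d \<eta> N by simp
    ultimately show "0 < \<rho>" "\<rho> < 1" "1 - \<theta> * d \<le> \<rho>" "1 - \<eta> / (2 * real N) \<le> \<rho>"
      unfolding \<rho>_def by auto
  qed
  have G: "1 \<le> G y" for y unfolding G_def using \<theta> shape_norm_nonneg[of n y] by simp
  have contract: "killed_iter 1 G x \<le> \<rho> * G x \<or> killed_iter N G x \<le> \<rho> ^ N * G x" for x
  proof (cases "R \<le> shape_norm n x")
    case True
    have "killed_iter 1 G x \<le> step_mean G x"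
      using killed_mean_le_step_mean[of G x] G by (simp add: order_trans[OF zero_le_one])
    also have "\<dots> \<le> (1 - \<theta> * d) * G x"
      unfolding G_def d_def by (rule step_mean_exp_shape_norm) (use \<theta> True in \<open>auto simp: R_def d_def\<close>)
    also have "\<dots> \<le> \<rho> * G x" using \<rho>(3) G[of x] by (intro mult_right_mono) auto
    finally show ?thesis ..
  next
    case False
    have "killed_iter N G x \<le> \<rho> ^ N * G x"
      unfolding G_def using False \<theta>(1,4) survival_le_on_ball[of x R] \<eta> N \<rho>(4)
      by (intro killed_iter_exp_shape_norm_on_ball) (auto simp: N_def \<eta>_def)
    then show ?thesis ..
  qed
  define c where "c = exp (\<theta> * real N) / \<rho> ^ N"
  have initial: "killed_iter m G x \<le> c * \<rho> ^ m * G x" if "m < N" for m x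
  proof -
    have "\<rho> ^ N \<le> \<rho> ^ m" using that \<rho> by (intro power_decreasing) auto
    then have "exp (\<theta> * real m) * \<rho> ^ N \<le> exp (\<theta> * real N) * \<rho> ^ m"
      using that \<theta> \<rho> by (intro mult_mono) auto
    then have "exp (\<theta> * real m) \<le> c * \<rho> ^ m" unfolding c_def using \<rho> by (simp add: field_simps)
    then show ?thesis
      using killed_iter_exp_shape_norm_le[OF \<theta>(1), of m x] G[of x] unfolding G_def
      by (smt (verit) mult_right_mono)
  qed
  have "survival m x \<le> (c * G x) * \<rho> ^ m" for m x
  proof -
    have "survival m x \<le> killed_iter m G x" by (rule killed_iter_mono) (use G in auto)
    also have "\<dots> \<le> c * \<rho> ^ m * G x"
      by (rule killed_iter_geometric[OF \<rho>(1) N _ _ initial contract])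
         (use \<rho> G in \<open>auto simp: c_def intro: order_trans[OF zero_le_one]\<close>)
    finally show ?thesis by (simp add: algebra_simps)
  qed
  then show ?thesis using \<rho>(1,2) by (intro exI[of _ "\<lambda>x. c * G x"] exI[of _ \<rho>]) simp
qed


lemma positive_recurrent: "positive_recurrent_exp n K S lam P"
proof -
  obtain C \<rho> where \<rho>: "0 < \<rho>" "\<rho> < 1" and decay: "\<And>m x. survival m x \<le> C x * \<rho> ^ m"
    using survival_geometric by blast
  have tail: "tau x (Suc m) \<le> C x * \<rho> ^ m" for x m
    by (rule order_trans[OF tau_Suc_le_survival decay])
  have sums_1: "tau x sums 1" for x
  proof -
    have "(\<lambda>m. \<rho> ^ m) \<longlonglongrightarrow> 0" using \<rho> by (intro LIMSEQ_power_zero) simp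
    then have "(\<lambda>m. C x * \<rho> ^ m) \<longlonglongrightarrow> 0" using tendsto_mult_left[of _ 0 _ "C x"] by simp
    then have "(\<lambda>m. survival m x) \<longlonglongrightarrow> 0"
    proof (rule real_tendsto_sandwich[where f="\<lambda>_. 0", rotated 3])
      show "\<forall>\<^sub>F m in sequentially. 0 \<le> survival m x" by (simp add: survival_nonneg)
      show "\<forall>\<^sub>F m in sequentially. survival m x \<le> C x * \<rho> ^ m" by (simp add: decay)
    qed simp
    then have "(\<lambda>m. 1 - survival m x) \<longlonglongrightarrow> 1 - 0" by (intro tendsto_diff tendsto_const)
    moreover have "(\<lambda>m. \<Sum>k<Suc m. tau x k) = (\<lambda>m. 1 - survival m x)"
      using sum_tau_plus_survival by (simp add: fun_eq_iff eq_diff_eq)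
    ultimately have "(\<lambda>m. \<Sum>k<Suc m. tau x k) \<longlonglongrightarrow> 1" by simp
    then show ?thesis unfolding sums_def by (rule LIMSEQ_imp_Suc)
  qed
  have exp_moments: "summable (\<lambda>m. exp (c * real m) * tau x m)" if "c < - ln \<rho>" for c x
    using tau_nonneg tail \<rho>(1) that by (rule summable_exp_mult_geometric_tail)
  have "0 < - ln \<rho>" using \<rho> by simp
  have moment: "summable (\<lambda>m. real m * tau x m)" for x
    using summable_mult_of_exp_moment[OF tau_nonneg _ exp_moments[of "- ln \<rho> / 2"]] \<open>0 < - ln \<rho>\<close>
    by simp
  show ?thesis
    unfolding positive_recurrent_exp_def finite_moment_def
  proof (intro conjI ballI exI[of _ "- ln \<rho>"] allI impI)
    fix c x assume "0 < c \<and> c < - ln \<rho>"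
    then show "summable (\<lambda>m. exp (c * real m) * tau x m)" by (intro exp_moments) simp
  qed (use sums_1 moment \<open>0 < - ln \<rho>\<close> in auto)
qed

end

section \<open>JSQ and PSERP\<close>

lemma stable_policy_JSQ:
  assumes sm: "storage_model n K S lam" and conn: "graph_connected n K S"
    and ps: "positive_solution n K S lam \<alpha>"
    and \<kappa>: "0 < \<kappa>" "\<forall>i\<in>{1..K}. \<forall>j<kap S i. \<kappa> \<le> \<alpha> i j"
  shows "stable_policy n K S lam \<alpha> (JSQ S) \<kappa> 1"
proof
  have Sne: "\<And>i. i \<in> {1..K} \<Longrightarrow> S i \<noteq> []" using sm unfolding storage_model_def by auto
  show "storage_model n K S lam" "graph_connected n K S" "positive_solution n K S lam \<alpha>" "0 < \<kappa>"
    "(0::real) < 1" using assms by auto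
  show "0 \<le> JSQ S x i j" "1 \<le> JSQ S x i (jmin S x i)" for x i j by (simp_all add: JSQ_def)
  show "(\<Sum>j<kap S i. JSQ S x i j) = 1" if i: "i \<in> {1..K}" for x i
    using jmin_spec[where S=S and i=i and x=x, OF Sne[OF i]] unfolding JSQ_def by simp
  show "lam i * (\<Sum>j<kap S i. JSQ S x i j * real (x (S i ! j)))
          \<le> (\<Sum>j<kap S i. \<alpha> i j * real (x (S i ! j))) - \<kappa> * nbhd_spread S x i" if i: "i \<in> {1..K}" for x i
  proof -
    let ?mn = "real (Min (x ` set (S i)))" and ?v = "\<lambda>j. real (x (S i ! j))"
    have "(\<Sum>j<kap S i. JSQ S x i j * ?v j) = (\<Sum>j<kap S i. if j = jmin S x i then ?v j else 0)"
      by (intro sum.cong) (auto simp: JSQ_def)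
    also have "\<dots> = ?mn" using jmin_spec[where S=S and i=i and x=x, OF Sne[OF i]] by simp
    finally have JSQ_mean: "(\<Sum>j<kap S i. JSQ S x i j * ?v j) = ?mn" .
    have \<alpha>_sum: "(\<Sum>j<kap S i. \<alpha> i j) = lam i" using ps i unfolding positive_solution_def by auto
    have \<alpha>_mean: "(\<Sum>j<kap S i. \<alpha> i j * ?v j) = lam i * ?mn + (\<Sum>j<kap S i. \<alpha> i j * (?v j - ?mn))"
      by (simp add: algebra_simps sum.distrib sum_distrib_right[symmetric] \<alpha>_sum sum_subtractf)
    obtain jM where jM: "jM < kap S i" "x (S i ! jM) = Max (x ` set (S i))"
      using jmax_spec[where S=S and i=i and x=x, OF Sne[OF i]] by blast
    have above_min: "0 \<le> ?v j - ?mn" if "j < kap S i" for j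
      using that unfolding kap_def by simp
    have "\<kappa> * nbhd_spread S x i \<le> \<alpha> i jM * (?v jM - ?mn)"
      unfolding nbhd_spread_def jM(2)[symmetric] using \<kappa>(2) i jM(1) above_min[OF jM(1)]
      by (intro mult_right_mono) auto
    also have "\<dots> \<le> (\<Sum>j<kap S i. \<alpha> i j * (?v j - ?mn))"
    proof (rule member_le_sum[where f="\<lambda>j. \<alpha> i j * (?v j - ?mn)"])
      fix j assume "j \<in> {..<kap S i} - {jM}"
      then have "j < kap S i" by simp
      then show "0 \<le> \<alpha> i j * (?v j - ?mn)"
        using ps i above_min unfolding positive_solution_def by (simp add: less_imp_le)
    qed (use jM(1) in auto)
    finally show ?thesis unfolding JSQ_mean \<alpha>_mean by linarith
  qed
qed

lemma sum_shift_weights: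
  fixes w v :: "nat \<Rightarrow> real"
  assumes "a < k" "b < k"
  shows "(\<Sum>j<k. (w j + (if j = a then \<epsilon> else 0) - (if j = b then \<epsilon> else 0)) * v j)
       = (\<Sum>j<k. w j * v j) + \<epsilon> * v a - \<epsilon> * v b"
proof -
  have "(\<Sum>j<k. (w j + (if j = a then \<epsilon> else 0) - (if j = b then \<epsilon> else 0)) * v j)
      = (\<Sum>j<k. w j * v j) + (\<Sum>j<k. if j = a then \<epsilon> * v j else 0) - (\<Sum>j<k. if j = b then \<epsilon> * v j else 0)"
    unfolding sum.distrib[symmetric] sum_subtractf[symmetric] by (intro sum.cong) (auto simp: algebra_simps)
  then show ?thesis using assms by simp
qed

lemma PSERP_scaled:
  assumes "S i \<noteq> []" "kap S i \<ge> 2" "0 < lam i"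
  shows "lam i * PSERP S lam \<alpha> \<epsilon> x i j
       = \<alpha> i j + (if j = jmin S x i then \<epsilon> else 0) - (if j = jmax S x i then \<epsilon> else 0)"
  using jmin_ne_jmax[OF assms(1,2), of x] assms(2,3) unfolding PSERP_def by auto

lemma stable_policy_PSERP:
  assumes sm: "storage_model n K S lam" and conn: "graph_connected n K S"
    and ps: "positive_solution n K S lam \<alpha>"
    and \<epsilon>: "0 < \<epsilon>" "\<forall>i\<in>{1..K}. \<forall>j<kap S i. \<epsilon> < \<alpha> i j"
    and \<kappa>: "0 < \<kappa>" "\<forall>i\<in>{1..K}. \<forall>j<kap S i. \<kappa> \<le> \<alpha> i j"
  shows "stable_policy n K S lam \<alpha> (PSERP S lam \<alpha> \<epsilon>) \<epsilon> (min 1 \<kappa>)"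
proof
  have Sne: "\<And>i. i \<in> {1..K} \<Longrightarrow> S i \<noteq> []" and lam_pos: "\<And>i. i \<in> {1..K} \<Longrightarrow> 0 < lam i"
    using sm unfolding storage_model_def by auto
  have \<alpha>_sum: "\<And>i. i \<in> {1..K} \<Longrightarrow> (\<Sum>j<kap S i. \<alpha> i j) = lam i"
    using ps unfolding positive_solution_def by auto
  have kap_2: "kap S i \<ge> 2" if "i \<in> {1..K}" "kap S i \<noteq> 1" for i
    using Sne[OF that(1)] that(2) unfolding kap_def by (cases "S i") (auto simp: Suc_le_eq)
  have jmin_jmax: "jmin S x i < kap S i" "jmax S x i < kap S i" if "i \<in> {1..K}" for x i
    using jmin_spec[where S=S and i=i and x=x] jmax_spec[where S=S and i=i and x=x] Sne[OF that] by auto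
  have scaled_sum: "lam i * (\<Sum>j<kap S i. PSERP S lam \<alpha> \<epsilon> x i j * v j)
      = (\<Sum>j<kap S i. \<alpha> i j * v j) + \<epsilon> * v (jmin S x i) - \<epsilon> * v (jmax S x i)"
    if i: "i \<in> {1..K}" and "kap S i \<noteq> 1" for x i and v :: "nat \<Rightarrow> real"
    using PSERP_scaled[where S=S and i=i and lam=lam, OF Sne[OF i] kap_2[OF that] lam_pos[OF i]] sum_shift_weights[OF jmin_jmax[OF i]]
    by (simp add: sum_distrib_left mult.assoc[symmetric])
  show "storage_model n K S lam" "graph_connected n K S" "positive_solution n K S lam \<alpha>" "0 < \<epsilon>"
    "0 < min 1 \<kappa>" using assms by auto
  show "0 \<le> PSERP S lam \<alpha> \<epsilon> x i j" if "i \<in> {1..K}" "j < kap S i" for x i j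
  proof -
    have "\<epsilon> < \<alpha> i j" using \<epsilon>(2) that by auto
    then show ?thesis unfolding PSERP_def using lam_pos[OF that(1)] \<epsilon>(1) by auto
  qed
  show "(\<Sum>j<kap S i. PSERP S lam \<alpha> \<epsilon> x i j) = 1" if i: "i \<in> {1..K}" for x i
  proof (cases "kap S i = 1")
    case False
    then have "lam i * (\<Sum>j<kap S i. PSERP S lam \<alpha> \<epsilon> x i j * 1) = lam i"
      using scaled_sum[OF i False, of x "\<lambda>_. 1"] \<alpha>_sum[OF i] by simp
    then show ?thesis using lam_pos[OF i] by simp
  qed (simp add: PSERP_def)
  show "min 1 \<kappa> \<le> PSERP S lam \<alpha> \<epsilon> x i (jmin S x i)" if i: "i \<in> {1..K}" for x i
  proof (cases "kap S i = 1")
    case False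
    have "\<kappa> \<le> \<alpha> i (jmin S x i)" using \<kappa>(2) i jmin_jmax[OF i] by auto
    moreover have "\<alpha> i (jmin S x i) + \<epsilon> \<le> (\<alpha> i (jmin S x i) + \<epsilon>) / lam i"
      using lam_pos[OF i] storage_model_lam_le_1[OF sm i] \<kappa> \<epsilon> \<open>\<kappa> \<le> \<alpha> i (jmin S x i)\<close>
      by (simp add: le_divide_eq mult_le_cancel_left1)
    ultimately show ?thesis unfolding PSERP_def using False \<epsilon> by simp
  qed (simp add: PSERP_def)
  show "lam i * (\<Sum>j<kap S i. PSERP S lam \<alpha> \<epsilon> x i j * real (x (S i ! j)))
          \<le> (\<Sum>j<kap S i. \<alpha> i j * real (x (S i ! j))) - \<epsilon> * nbhd_spread S x i" if i: "i \<in> {1..K}" for x i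
  proof (cases "kap S i = 1")
    case True
    then obtain s where "S i = [s]" unfolding kap_def by (cases "S i") auto
    then show ?thesis using True \<alpha>_sum[OF i] unfolding PSERP_def nbhd_spread_def by simp
  next
    case False
    have "x (S i ! jmin S x i) = Min (x ` set (S i))" "x (S i ! jmax S x i) = Max (x ` set (S i))"
      using jmin_spec[where S=S and i=i and x=x] jmax_spec[where S=S and i=i and x=x] Sne[OF i] by auto
    then show ?thesis
      using scaled_sum[OF i False, of x "\<lambda>j. real (x (S i ! j))"]
      unfolding nbhd_spread_def by (simp add: algebra_simps)
  qed
qed

theorem theorem2p1:
  fixes n K :: nat and S :: "nat \<Rightarrow> nat list" and lam :: "nat \<Rightarrow> real"
  assumes "storage_model n K S lam"
    and "graph_connected n K S"
    and "\<exists>\<alpha>. positive_solution n K S lam \<alpha>"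
  shows "positive_recurrent_exp n K S lam (JSQ S)
     \<and> (\<forall>\<alpha> \<epsilon>. positive_solution n K S lam \<alpha> \<and> 0 < \<epsilon>
          \<and> (\<forall>i\<in>{1..K}. \<forall>j<kap S i. \<epsilon> < \<alpha> i j)
          \<longrightarrow> positive_recurrent_exp n K S lam (PSERP S lam \<alpha> \<epsilon>))"
proof (intro conjI allI impI)
  obtain \<alpha> where ps: "positive_solution n K S lam \<alpha>" using assms(3) by blast
  obtain \<kappa> where "0 < \<kappa>" "\<forall>i\<in>{1..K}. \<forall>j<kap S i. \<kappa> \<le> \<alpha> i j"
    using positive_solution_lower_bound[OF ps] by blast
  then interpret stable_policy n K S lam \<alpha> "JSQ S" \<kappa> 1
    by (rule stable_policy_JSQ[OF assms(1,2) ps])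
  show "positive_recurrent_exp n K S lam (JSQ S)" by (rule positive_recurrent)
next
  fix \<alpha> \<epsilon>
  assume h: "positive_solution n K S lam \<alpha> \<and> 0 < \<epsilon> \<and> (\<forall>i\<in>{1..K}. \<forall>j<kap S i. \<epsilon> < \<alpha> i j)"
  obtain \<kappa> where "0 < \<kappa>" "\<forall>i\<in>{1..K}. \<forall>j<kap S i. \<kappa> \<le> \<alpha> i j"
    using positive_solution_lower_bound h by blast
  then interpret stable_policy n K S lam \<alpha> "PSERP S lam \<alpha> \<epsilon>" \<epsilon> "min 1 \<kappa>"
    using stable_policy_PSERP[OF assms(1,2)] h by blast
  show "positive_recurrent_exp n K S lam (PSERP S lam \<alpha> \<epsilon>)" by (rule positive_recurrent)
qed

end
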